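(* Let $r\ge2$ be an integer and let $\varphi,\psi$ be a discrete and a continuous kernel satisfying conditions (i) and (ii) for this $r$, with both satisfying condition $(\Theta)$ for some $\theta>r+1$. 1. If $f\in Lip^*(\alpha,L^\infty)$ with $0<\alpha<r$, then $\|\mathcal{D}_w^{\varphi,\psi}f-f\|_\infty=\mathcal{O}(w^{-\alpha})$ as $w\to+\infty$. 2. If $f\in C^r(\mathbb{R})$, then $\|\mathcal{D}_w^{\varphi,\psi}f-f\|_\infty=\mathcal{O}(w^{-r})$ as $w\to+\infty$.
   Context: $C(\mathbb{R})$ is the space of bounded, uniformly continuous real functions on $\mathbb{R}$ with the sup-norm. $C^r(\mathbb{R})$ is the set of $r$-times differentiable $f$ with $f,f',\dots,f^{(r)}\in C(\mathbb{R})$. A discrete kernel is a bounded function $\varphi\in L^1(\mathbb{R})$ with $\sum_{k\in\mathbb{Z}}\varphi(u-k)=1$ for all $u$. A continuous kernel is a function $\psi\in L^1(\mathbb{R})$, bounded near $0$, with $\int_{\mathbb{R}}\psi=1$. Moments: $m_\nu(\varphi,u)=\sum_{k}\varphi(u-k)(k-u)^\nu$ and $\widetilde m_\nu(\psi)=\int u^\nu\psi(u)\,du$. Durrmeyer sampling operators: \[ (\mathcal{D}_w^{\varphi,\psi}f)(x)=\sum_{k\in\mathbb{Z}}\varphi(wx-k)\,w\int_{\mathbb{R}}\psi(wu-k)f(u)\,du,\qquad w>0. \] Conditions: - (i): $m_\nu(\varphi,u)=:m_\nu(\varphi)$ is independent of $u$ for $\nu=1,\dots,r$. - (ii): $\sum_{\nu=0}^{i}\binom{i}{\nu}m_{i-\nu}(\varphi)\widetilde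 m_\nu(\psi)=0$ for $i=1,\dots,r-1$. - $(\Theta)$ with $\theta$: $\xi(u)=\mathcal{O}(|u|^{-\theta})$ as $|u|\to\infty$. Moduli of smoothness: $\omega_m(f,\delta)_p=\sup_{|t|\le\delta}\|\sum_{j=0}^m\binom{m}{j}(-1)^{m-j}f(\cdot+jt)\|_p$. For $\alpha>0$, $Lip^*(\alpha,L^\infty)$ is the set of $f\in C(\mathbb{R})$ with $\omega_{\lfloor\alpha\rfloor+1}(f,\delta)_\infty=\mathcal{O}(\delta^\alpha)$ as $\delta\to0^+$. *)

theory Defs
  imports "HOL-Analysis.Analysis" "HOL-Library.Landau_Symbols"
begin

definition bucont :: "(real \<Rightarrow> real) \<Rightarrow> bool" where
  "bucont f \<longleftrightarrow> bounded (range f) \<and> uniformly_continuous_on UNIV f"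

definition Cr :: "nat \<Rightarrow> (real \<Rightarrow> real) \<Rightarrow> bool" where
  "Cr r f \<longleftrightarrow>
     (\<forall>k<r. \<forall>x. ((deriv ^^ k) f has_real_derivative (deriv ^^ Suc k) f x) (at x)) \<and>
     (\<forall>k\<le>r. bucont ((deriv ^^ k) f))"

definition discrete_kernel :: "(real \<Rightarrow> real) \<Rightarrow> bool" where
  "discrete_kernel \<phi> \<longleftrightarrow> bounded (range \<phi>) \<and> integrable lborel \<phi> \<and>
     (\<forall>u. ((\<lambda>k::int. \<phi> (u - of_int k)) has_sum 1) UNIV)"

definition continuous_kernel :: "(real \<Rightarrow> real) \<Rightarrow> bool" where
  "continuous_kernel \<psi> \<longleftrightarrow> integrable lborel \<psi> \<and>
     (\<exists>\<delta>>0. \<exists>M. \<forall>u. \<bar>u\<bar> < \<delta> \<longrightarrow> \<bar>\<psi> u\<bar> \<le> M) \<and>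
     (LINT u|lborel. \<psi> u) = 1"

definition dmoment :: "(real \<Rightarrow> real) \<Rightarrow> nat \<Rightarrow> real \<Rightarrow> real" where
  "dmoment \<phi> \<nu> u = (\<Sum>\<^sub>\<infinity>k::int. \<phi> (u - of_int k) * (of_int k - u) ^ \<nu>)"

definition cmoment :: "(real \<Rightarrow> real) \<Rightarrow> nat \<Rightarrow> real" where
  "cmoment \<psi> \<nu> = (LINT u|lborel. u ^ \<nu> * \<psi> u)"

text \<open>Condition (i): m_nu(phi,u) independent of u for nu = 1..r;
  then m_nu(phi) := m_nu(phi,0).\<close>
definition cond_i :: "nat \<Rightarrow> (real \<Rightarrow> real) \<Rightarrow> bool" where
  "cond_i r \<phi> \<longleftrightarrow> (\<forall>\<nu>\<in>{1..r}. \<forall>u. dmoment \<phi> \<nu> u = dmoment \<phi> \<nu> 0)"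

definition cond_ii :: "nat \<Rightarrow> (real \<Rightarrow> real) \<Rightarrow> (real \<Rightarrow> real) \<Rightarrow> bool" where
  "cond_ii r \<phi> \<psi> \<longleftrightarrow> (\<forall>i\<in>{1..r-1}.
     (\<Sum>\<nu>=0..i. real (i choose \<nu>) * dmoment \<phi> (i - \<nu>) 0 * cmoment \<psi> \<nu>) = 0)"

definition cond_Theta :: "real \<Rightarrow> (real \<Rightarrow> real) \<Rightarrow> bool" where
  "cond_Theta \<theta> \<xi> \<longleftrightarrow> \<xi> \<in> O[at_infinity](\<lambda>u. \<bar>u\<bar> powr (-\<theta>))"

definition durrmeyer :: "(real \<Rightarrow> real) \<Rightarrow> (real \<Rightarrow> real) \<Rightarrow> real \<Rightarrow> (real \<Rightarrow> real) \<Rightarrow> real \<Rightarrow> real" where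
  "durrmeyer \<phi> \<psi> w f x =
     (\<Sum>\<^sub>\<infinity>k::int. \<phi> (w * x - of_int k) * (w * (LINT u|lborel. \<psi> (w * u - of_int k) * f u)))"

definition supnorm :: "(real \<Rightarrow> real) \<Rightarrow> real" where
  "supnorm g = (SUP x. \<bar>g x\<bar>)"

definition fdiff :: "nat \<Rightarrow> (real \<Rightarrow> real) \<Rightarrow> real \<Rightarrow> real \<Rightarrow> real" where
  "fdiff m f t x = (\<Sum>j=0..m. real (m choose j) * (-1) ^ (m - j) * f (x + real j * t))"

definition modsmooth :: "nat \<Rightarrow> (real \<Rightarrow> real) \<Rightarrow> real \<Rightarrow> real" where
  "modsmooth m f \<delta> = (SUP t\<in>{-\<delta>..\<delta>}. supnorm (fdiff m f t))"

definition LipStar :: "real \<Rightarrow> (real \<Rightarrow> real) \<Rightarrow> bool" where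
  "LipStar \<alpha> f \<longleftrightarrow> bucont f \<and>
     (\<lambda>\<delta>. modsmooth (nat \<lfloor>\<alpha>\<rfloor> + 1) f \<delta>) \<in> O[at_right 0](\<lambda>\<delta>. \<delta> powr \<alpha>)"

end

theory Submission
  imports Defs
begin

text \<open>Conditions (i) and (ii) say that, at every point \<open>x\<close>, the operator reproduces each
  polynomial in \<open>y - x\<close> of degree below \<open>r\<close>, and the decay \<open>\<theta> > r + 1\<close> makes the absolute
  moments of order at most \<open>r\<close> of both kernels finite. Expanding a function \<open>g\<close> whose \<open>m\<close>-th
  derivative (\<open>m \<le> r\<close>) is bounded by \<open>M\<close> in its Taylor polynomial at \<open>x\<close>, only the remainder,
  of size \<open>M |y - x|\<^sup>m / m!\<close>, survives, and rescaling by \<open>w\<close> gives the Jackson estimate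
  \<open>|D\<^sub>w g x - g x| \<le> C M / w\<^sup>m\<close>; for \<open>m = r\<close> this is the second claim.
  For \<open>f \<in> Lip\<^sup>*(\<alpha>)\<close> and \<open>m = \<lfloor>\<alpha>\<rfloor> + 1\<close>, a combination \<open>F\<close> of iterated Steklov means of
  \<open>f\<close> with steps of order \<open>1/w\<close> is within \<open>O(w powr -\<alpha>)\<close> of \<open>f\<close> and has \<open>m\<close>-th derivative
  \<open>O(w powr (m - \<alpha>))\<close>; since the operator is bounded, the Jackson estimate for \<open>F\<close> yields the
  first claim.\<close>

section \<open>Infinite sums and integrals\<close>

lemma abs_infsum_le_comparison:
  fixes a b :: "'a \<Rightarrow> real"
  assumes "b summable_on A" "\<And>k. k \<in> A \<Longrightarrow> \<bar>a k\<bar> \<le> b k"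
  shows "a summable_on A" "\<bar>infsum a A\<bar> \<le> infsum b A"
proof -
  have n: "(\<lambda>k. norm (a k)) summable_on A"
    by (rule summable_on_comparison_test[OF assms(1)]) (use assms(2) in auto)
  then show "a summable_on A" using summable_on_iff_abs_summable_on_real by blast
  have "\<bar>infsum a A\<bar> \<le> infsum (\<lambda>k. norm (a k)) A" using norm_infsum_bound[of a A] n by simp
  also have "\<dots> \<le> infsum b A" by (rule infsum_mono[OF n assms(1)]) (use assms(2) in auto)
  finally show "\<bar>infsum a A\<bar> \<le> infsum b A" .
qed

lemma has_sum_sum:
  fixes f :: "'i \<Rightarrow> 'a \<Rightarrow> 'b::topological_comm_monoid_add"
  assumes "finite I" "\<And>i. i \<in> I \<Longrightarrow> (f i has_sum s i) A"
  shows "((\<lambda>x. \<Sum>i\<in>I. f i x) has_sum (\<Sum>i\<in>I. s i)) A"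
  using assms by (induction I rule: finite_induct) (auto intro: has_sum_add)

lemma has_sum_diff:
  fixes f g :: "'a \<Rightarrow> 'b::topological_ab_group_add"
  assumes "(f has_sum s) A" "(g has_sum t) A"
  shows "((\<lambda>x. f x - g x) has_sum (s - t)) A"
proof -
  have "((\<lambda>x. - g x) has_sum - t) A" using assms(2) by (simp add: has_sum_uminus)
  from has_sum_add[OF assms(1) this] show ?thesis by simp
qed

lemma summable_on_int_powr:
  fixes s :: real assumes "s > 1"
  shows "(\<lambda>i::int. (1 + \<bar>real_of_int i\<bar>) powr (-s)) summable_on UNIV"
proof -
  let ?g = "\<lambda>i::int. (1 + \<bar>real_of_int i\<bar>) powr (-s)"
  have "summable (\<lambda>n. real n powr (-s))" using assms by (subst summable_real_powr_iff) auto
  hence "summable (\<lambda>n. real (Suc n) powr (-s))" by (subst summable_Suc_iff)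
  from sums_nonneg_imp_has_sum[OF summable_sums[OF this]]
  have nat_part: "(\<lambda>n. real (Suc n) powr (-s)) summable_on UNIV"
    unfolding summable_on_def by auto
  have nonneg: "?g summable_on range int"
    by (subst summable_on_reindex) (auto simp: o_def add.commute intro: summable_on_cong[THEN iffD1, OF _ nat_part])
  have "(\<lambda>n. real (Suc (Suc n)) powr (-s)) summable_on UNIV"
    by (rule summable_on_comparison_test[OF nat_part]) (use assms in \<open>auto intro!: powr_mono2'\<close>)
  hence neg: "?g summable_on range (\<lambda>n. - int n - 1)"
    by (subst summable_on_reindex) (auto simp: inj_on_def o_def add.commute intro: summable_on_cong[THEN iffD1])
  have cover: "range int \<union> range (\<lambda>n. - int n - 1) = (UNIV::int set)"
  proof -
    have "i \<in> range int \<union> range (\<lambda>n. - int n - 1)" for i :: int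
    proof (cases "i \<ge> 0")
      case True then show ?thesis by (auto intro!: image_eqI[of _ _ "nat i"])
    next
      case False then show ?thesis by (auto intro!: image_eqI[of _ _ "nat (-i-1)"])
    qed
    thus ?thesis by auto
  qed
  have "?g summable_on (range int \<union> range (\<lambda>n. - int n - 1))"
    by (rule summable_on_Un_disjoint[OF nonneg neg]) auto
  with cover show ?thesis by simp
qed

lemma shifted_int_powr_sum_bounded:
  fixes s :: real assumes "s > 1"
  obtains S where "\<And>u. (\<lambda>k::int. (1 + \<bar>u - real_of_int k\<bar>) powr (-s)) summable_on UNIV"
    "\<And>u. infsum (\<lambda>k::int. (1 + \<bar>u - real_of_int k\<bar>) powr (-s)) UNIV \<le> S"
proof -
  let ?g = "\<lambda>i::int. (1 + \<bar>real_of_int i\<bar>) powr (-s)"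
  have gs: "?g summable_on UNIV" by (rule summable_on_int_powr[OF assms])
  define S where "S = 2 powr s * infsum ?g UNIV"
  have "(\<lambda>k::int. (1 + \<bar>u - real_of_int k\<bar>) powr (-s)) summable_on UNIV \<and>
     infsum (\<lambda>k::int. (1 + \<bar>u - real_of_int k\<bar>) powr (-s)) UNIV \<le> S" for u
  proof -
    define n where "n = \<lfloor>u\<rfloor>"
    have shift: "bij_betw (\<lambda>i::int. i + n) UNIV UNIV"
      by (rule bij_betwI[of _ _ _ "\<lambda>i. i - n"]) auto
    have "((\<lambda>k. ?g (k - n)) has_sum infsum ?g UNIV) UNIV"
      using has_sum_reindex_bij_betw[OF shift, of "\<lambda>k. ?g (k - n)" "infsum ?g UNIV"] has_sum_infsum[OF gs]
      by (simp add: o_def)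
    hence major: "((\<lambda>k. 2 powr s * ?g (k - n)) has_sum S) UNIV"
      unfolding S_def by (rule has_sum_cmult_right)
    have bound: "\<bar>(1 + \<bar>u - real_of_int k\<bar>) powr (-s)\<bar> \<le> 2 powr s * ?g (k - n)" for k
    proof -
      have "u - 1 < real_of_int n" "real_of_int n \<le> u" unfolding n_def by linarith+
      hence "1 + \<bar>real_of_int (k - n)\<bar> \<le> 2 * (1 + \<bar>u - real_of_int k\<bar>)"
        by (simp add: abs_if)
      from powr_mono2'[OF _ _ this, of "-s"]
      have "(2 * (1 + \<bar>u - real_of_int k\<bar>)) powr (-s) \<le> ?g (k - n)"
        using assms by auto
      moreover have "(2 * (1 + \<bar>u - real_of_int k\<bar>)) powr (-s) =
          2 powr (-s) * (1 + \<bar>u - real_of_int k\<bar>) powr (-s)"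
        by (rule powr_mult)
      ultimately have "2 powr (-s) * (1 + \<bar>u - real_of_int k\<bar>) powr (-s) \<le> ?g (k - n)"
        by linarith
      hence "2 powr s * (2 powr (-s) * (1 + \<bar>u - real_of_int k\<bar>) powr (-s)) \<le> 2 powr s * ?g (k - n)"
        by (intro mult_left_mono) auto
      thus ?thesis by (simp add: powr_minus field_simps)
    qed
    note cmp = abs_infsum_le_comparison[OF has_sum_imp_summable[OF major] bound]
    thus ?thesis using infsumI[OF major] abs_ge_self by (metis order_trans)
  qed
  with that show ?thesis by blast
qed

lemma integrable_powr_tail:
  fixes e R :: real assumes "e < -1" "R > 0"
  shows "integrable lborel (\<lambda>v. indicator {R..} v * v powr e)"
proof -
  have "((\<lambda>x. x powr e) has_integral -(R powr (e+1)) / (e+1)) {R..}"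
    by (rule has_integral_powr_to_inf[OF assms])
  hence "integral\<^sup>N lborel (\<lambda>x. ennreal (indicator {R..} x * x powr e)) = ennreal (-(R powr (e+1)) / (e+1))"
    by (intro nn_integral_has_integral_lebesgue) auto
  thus ?thesis by (intro integrableI_nn_integral_finite) auto
qed

lemma Taylor_remainder_bound:
  fixes g :: "real \<Rightarrow> real"
  assumes "m > 0" "dif 0 = g" "\<And>i t. i < m \<Longrightarrow> (dif i has_real_derivative dif (Suc i) t) (at t)"
    "\<And>t. \<bar>dif m t\<bar> \<le> M"
  shows "\<bar>g y - (\<Sum>i<m. dif i x / fact i * (y - x) ^ i)\<bar> \<le> M / fact m * \<bar>y - x\<bar> ^ m"
proof (cases "y = x")
  case True
  have "(\<Sum>i<m. dif i x / fact i * (y - x) ^ i) = (\<Sum>i<m. if i = 0 then g x else 0)"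
    using True assms(2) by (intro sum.cong) auto
  also have "\<dots> = g x" using assms(1) by (simp add: sum.delta)
  finally show ?thesis using True assms(1) by (simp add: power_0_left)
next
  case False
  obtain t where "g y = (\<Sum>i<m. dif i x / fact i * (y - x) ^ i) + dif m t / fact m * (y - x) ^ m"
    using Taylor[of m dif g "min x y" "max x y" x y] assms False by auto
  hence "\<bar>g y - (\<Sum>i<m. dif i x / fact i * (y - x) ^ i)\<bar> = \<bar>dif m t\<bar> / fact m * \<bar>y - x\<bar> ^ m"
    by (simp add: abs_mult power_abs)
  also have "\<dots> \<le> M / fact m * \<bar>y - x\<bar> ^ m"
    by (intro mult_right_mono divide_right_mono assms(4)) auto
  finally show ?thesis .
qed

lemma abs_add_power_le:
  fixes a b :: real
  shows "\<bar>a + b\<bar> ^ m \<le> 2 ^ m * (\<bar>a\<bar> ^ m + \<bar>b\<bar> ^ m)"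
proof -
  have "\<bar>a + b\<bar> ^ m \<le> (2 * max \<bar>a\<bar> \<bar>b\<bar>) ^ m" by (intro power_mono) auto
  also have "\<dots> = 2 ^ m * max \<bar>a\<bar> \<bar>b\<bar> ^ m" by (simp add: power_mult_distrib)
  also have "max \<bar>a\<bar> \<bar>b\<bar> ^ m \<le> \<bar>a\<bar> ^ m + \<bar>b\<bar> ^ m" by (auto simp: max_def)
  finally show ?thesis by simp
qed

section \<open>Decay of the kernels\<close>

lemma cond_Theta_tail_bound:
  assumes "cond_Theta \<theta> \<xi>"
  obtains R C where "R \<ge> 1" "\<And>t. R \<le> \<bar>t\<bar> \<Longrightarrow> \<bar>\<xi> t\<bar> \<le> C * \<bar>t\<bar> powr (-\<theta>)"
proof -
  from assms obtain c where "eventually (\<lambda>t. norm (\<xi> t) \<le> c * norm (\<bar>t\<bar> powr -\<theta>)) at_infinity"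
    unfolding cond_Theta_def by (elim landau_o.bigE)
  then obtain b where "\<And>t. b \<le> norm t \<Longrightarrow> \<bar>\<xi> t\<bar> \<le> c * \<bar>t\<bar> powr -\<theta>"
    by (auto simp: eventually_at_infinity)
  then show ?thesis by (intro that[of "max b 1" c]) auto
qed

lemma cond_Theta_global_bound:
  assumes "bounded (range \<xi>)" "cond_Theta \<theta> \<xi>" "\<theta> \<ge> 0"
  obtains C where "\<And>t. \<bar>\<xi> t\<bar> \<le> C * (1 + \<bar>t\<bar>) powr (-\<theta>)"
proof -
  obtain B where B: "\<And>t. \<bar>\<xi> t\<bar> \<le> B" using assms(1) unfolding bounded_iff by auto
  obtain R c where R: "R \<ge> 1" and c: "\<And>t. R \<le> \<bar>t\<bar> \<Longrightarrow> \<bar>\<xi> t\<bar> \<le> c * \<bar>t\<bar> powr (-\<theta>)"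
    using cond_Theta_tail_bound[OF assms(2)] by blast
  define C where "C = max (\<bar>c\<bar> * 2 powr \<theta>) (\<bar>B\<bar> * (1 + R) powr \<theta>)"
  have "\<bar>\<xi> t\<bar> \<le> C * (1 + \<bar>t\<bar>) powr (-\<theta>)" for t
  proof (cases "\<bar>t\<bar> \<ge> R")
    case True
    have "(2 * \<bar>t\<bar>) powr (-\<theta>) \<le> (1 + \<bar>t\<bar>) powr (-\<theta>)"
      by (rule powr_mono2') (use assms(3) R True in auto)
    hence "2 powr (-\<theta>) * \<bar>t\<bar> powr (-\<theta>) \<le> (1 + \<bar>t\<bar>) powr (-\<theta>)" by (simp add: powr_mult)
    hence "2 powr \<theta> * (2 powr (-\<theta>) * \<bar>t\<bar> powr (-\<theta>)) \<le> 2 powr \<theta> * (1 + \<bar>t\<bar>) powr (-\<theta>)"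
      by (intro mult_left_mono) auto
    hence "\<bar>t\<bar> powr (-\<theta>) \<le> 2 powr \<theta> * (1 + \<bar>t\<bar>) powr (-\<theta>)" by (simp add: powr_minus field_simps)
    hence "\<bar>c\<bar> * \<bar>t\<bar> powr (-\<theta>) \<le> \<bar>c\<bar> * 2 powr \<theta> * (1 + \<bar>t\<bar>) powr (-\<theta>)"
      by (simp add: mult.assoc mult_left_mono)
    also have "\<dots> \<le> C * (1 + \<bar>t\<bar>) powr (-\<theta>)" unfolding C_def by (intro mult_right_mono) auto
    finally have "\<bar>c\<bar> * \<bar>t\<bar> powr (-\<theta>) \<le> C * (1 + \<bar>t\<bar>) powr (-\<theta>)" .
    moreover have "c * \<bar>t\<bar> powr (-\<theta>) \<le> \<bar>c\<bar> * \<bar>t\<bar> powr (-\<theta>)" by (intro mult_right_mono) auto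
    ultimately show ?thesis using c[OF True] by linarith
  next
    case False
    have "(1 + R) powr (-\<theta>) \<le> (1 + \<bar>t\<bar>) powr (-\<theta>)"
      by (rule powr_mono2') (use assms(3) False in auto)
    hence "\<bar>B\<bar> * ((1 + R) powr \<theta> * (1 + R) powr (-\<theta>)) \<le> \<bar>B\<bar> * ((1 + R) powr \<theta> * (1 + \<bar>t\<bar>) powr (-\<theta>))"
      by (intro mult_left_mono) auto
    moreover have "(1 + R) powr \<theta> * (1 + R) powr (-\<theta>) = 1" using R by (simp add: powr_minus)
    ultimately have "\<bar>B\<bar> \<le> \<bar>B\<bar> * (1 + R) powr \<theta> * (1 + \<bar>t\<bar>) powr (-\<theta>)" by (simp add: mult.assoc)
    also have "\<dots> \<le> C * (1 + \<bar>t\<bar>) powr (-\<theta>)" unfolding C_def by (intro mult_right_mono) auto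
    finally show ?thesis using B[of t] by linarith
  qed
  with that show ?thesis by blast
qed

lemma cond_Theta_moment_sum_bounded:
  assumes "bounded (range \<xi>)" "cond_Theta \<theta> \<xi>" "real j + 1 < \<theta>"
  obtains A where "\<And>u. (\<lambda>k::int. \<bar>\<xi> (u - real_of_int k)\<bar> * \<bar>real_of_int k - u\<bar> ^ j) summable_on UNIV"
    "\<And>u. infsum (\<lambda>k::int. \<bar>\<xi> (u - real_of_int k)\<bar> * \<bar>real_of_int k - u\<bar> ^ j) UNIV \<le> A"
proof -
  obtain C where C: "\<And>t. \<bar>\<xi> t\<bar> \<le> C * (1 + \<bar>t\<bar>) powr (-\<theta>)"
    using cond_Theta_global_bound[OF assms(1,2), of thesis] assms(3) by auto
  obtain S where S: "\<And>u. (\<lambda>k::int. (1 + \<bar>u - real_of_int k\<bar>) powr (-(\<theta> - real j))) summable_on UNIV"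
    "\<And>u. infsum (\<lambda>k::int. (1 + \<bar>u - real_of_int k\<bar>) powr (-(\<theta> - real j))) UNIV \<le> S"
    using shifted_int_powr_sum_bounded[of "\<theta> - real j"] assms(3) by auto
  have C0: "C \<ge> 0" using C[of 0] by (smt (verit) powr_gt_zero zero_le_mult_iff)
  have bound: "\<bar>\<bar>\<xi> (u - real_of_int k)\<bar> * \<bar>real_of_int k - u\<bar> ^ j\<bar> \<le>
      C * (1 + \<bar>u - real_of_int k\<bar>) powr (-(\<theta> - real j))" for u k
  proof -
    let ?x = "1 + \<bar>u - real_of_int k\<bar>"
    have "\<bar>real_of_int k - u\<bar> ^ j \<le> ?x ^ j" by (rule power_mono) auto
    also have "\<dots> = ?x powr (real j)" by (simp add: powr_realpow)
    finally have "\<bar>real_of_int k - u\<bar> ^ j \<le> ?x powr (real j)" .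
    hence "\<bar>\<xi> (u - real_of_int k)\<bar> * \<bar>real_of_int k - u\<bar> ^ j \<le> (C * ?x powr (-\<theta>)) * ?x powr (real j)"
      using C0 by (intro mult_mono C) auto
    also have "\<dots> = C * ?x powr (-(\<theta> - real j))" by (simp add: powr_add[symmetric] mult.assoc)
    finally show ?thesis by simp
  qed
  have major: "(\<lambda>k::int. C * (1 + \<bar>u - real_of_int k\<bar>) powr (-(\<theta> - real j))) summable_on UNIV" for u
    by (rule summable_on_cmult_right[OF S(1)])
  have "(\<lambda>k::int. \<bar>\<xi> (u - real_of_int k)\<bar> * \<bar>real_of_int k - u\<bar> ^ j) summable_on UNIV \<and>
      infsum (\<lambda>k::int. \<bar>\<xi> (u - real_of_int k)\<bar> * \<bar>real_of_int k - u\<bar> ^ j) UNIV \<le> C * S" for u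
  proof -
    note cmp = abs_infsum_le_comparison[OF major bound, of u]
    have "infsum (\<lambda>k::int. \<bar>\<xi> (u - real_of_int k)\<bar> * \<bar>real_of_int k - u\<bar> ^ j) UNIV \<le>
        infsum (\<lambda>k::int. C * (1 + \<bar>u - real_of_int k\<bar>) powr (-(\<theta> - real j))) UNIV"
      using cmp(2) by linarith
    also have "\<dots> \<le> C * S"
      by (simp only: infsum_cmult_right[OF S(1)]) (intro mult_left_mono S(2) C0)
    finally show ?thesis using cmp(1) by blast
  qed
  with that show ?thesis by blast
qed

lemma cond_Theta_integrable_moment:
  assumes "integrable lborel \<xi>" "cond_Theta \<theta> \<xi>" "real j + 1 < \<theta>"
  shows "integrable lborel (\<lambda>v. \<bar>v\<bar> ^ j * \<bar>\<xi> v\<bar>)"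
proof -
  obtain R C where R: "R \<ge> 1" and C: "\<And>t. R \<le> \<bar>t\<bar> \<Longrightarrow> \<bar>\<xi> t\<bar> \<le> C * \<bar>t\<bar> powr (-\<theta>)"
    using cond_Theta_tail_bound[OF assms(2)] by blast
  define T where "T = (\<lambda>v. indicator {R..} v * v powr (real j - \<theta>))"
  have "integrable lborel T" unfolding T_def
    by (rule integrable_powr_tail) (use assms(3) R in auto)
  moreover from lborel_integrable_real_affine[OF this, of "-1" 0]
  have "integrable lborel (\<lambda>v. T (- v))" by simp
  ultimately have major: "integrable lborel (\<lambda>v. R ^ j * \<bar>\<xi> v\<bar> + \<bar>C\<bar> * (T v + T (- v)))"
    using assms(1) by auto
  have T0: "T v \<ge> 0" for v unfolding T_def by (auto simp: indicator_def)
  have dominated: "\<bar>v\<bar> ^ j * \<bar>\<xi> v\<bar> \<le> R ^ j * \<bar>\<xi> v\<bar> + \<bar>C\<bar> * (T v + T (- v))" for v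
  proof (cases "\<bar>v\<bar> \<le> R")
    case True
    have "\<bar>v\<bar> ^ j * \<bar>\<xi> v\<bar> \<le> R ^ j * \<bar>\<xi> v\<bar>"
      by (intro mult_right_mono power_mono) (use True in auto)
    moreover have "0 \<le> \<bar>C\<bar> * (T v + T (- v))" using T0[of v] T0[of "-v"] by simp
    ultimately show ?thesis by linarith
  next
    case False
    hence "\<bar>v\<bar> > 0" using R by auto
    hence "\<bar>v\<bar> ^ j * \<bar>\<xi> v\<bar> \<le> \<bar>v\<bar> powr (real j) * (C * \<bar>v\<bar> powr (-\<theta>))"
      using C[of v] False by (simp add: powr_realpow mult_left_mono)
    also have "\<dots> = C * \<bar>v\<bar> powr (real j - \<theta>)" by (simp add: powr_add[symmetric])
    also have "\<dots> = C * (T v + T (- v))"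
      unfolding T_def by (cases "v \<ge> 0") (use False R in \<open>auto simp: indicator_def\<close>)
    also have "\<dots> \<le> \<bar>C\<bar> * (T v + T (- v))" using T0[of v] T0[of "-v"] by (intro mult_right_mono) auto
    moreover have "0 \<le> R ^ j * \<bar>\<xi> v\<bar>" using R by simp
    ultimately show ?thesis by linarith
  qed
  moreover have "\<xi> \<in> borel_measurable lborel" using borel_measurable_integrable[OF assms(1)] .
  ultimately show ?thesis
    by (intro Bochner_Integration.integrable_bound[OF major])
      (auto intro!: AE_I2 order_trans[OF dominated abs_ge_self])
qed

section \<open>Sup norm, forward differences and moduli of smoothness\<close>

lemma abs_supnorm_le:
  assumes "\<And>x. \<bar>g x\<bar> \<le> C" shows "\<bar>supnorm g\<bar> \<le> C"
proof -
  have bdd: "bdd_above (range (\<lambda>x. \<bar>g x\<bar>))" by (rule bdd_aboveI[where M=C]) (auto intro: assms)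
  have "0 \<le> \<bar>g 0\<bar>" by simp
  also have "\<bar>g 0\<bar> \<le> supnorm g" unfolding supnorm_def by (rule cSUP_upper[OF _ bdd]) simp
  finally have "0 \<le> supnorm g" .
  moreover have "supnorm g \<le> C" unfolding supnorm_def by (rule cSUP_least) (auto intro: assms)
  ultimately show ?thesis by simp
qed

lemma supnorm_bigo:
  assumes "eventually (\<lambda>w. \<forall>x. \<bar>g w x\<bar> \<le> C * h w) F"
  shows "(\<lambda>w. supnorm (g w)) \<in> O[F](h)"
proof (rule landau_o.bigI)
  show "eventually (\<lambda>w. norm (supnorm (g w)) \<le> (\<bar>C\<bar> + 1) * norm (h w)) F"
  proof (rule eventually_mono[OF assms])
    fix w assume "\<forall>x. \<bar>g w x\<bar> \<le> C * h w"
    hence "\<bar>supnorm (g w)\<bar> \<le> C * h w" by (intro abs_supnorm_le) blast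
    also have "\<dots> \<le> \<bar>C\<bar> * \<bar>h w\<bar>" by (metis abs_ge_self abs_mult)
    also have "\<dots> \<le> (\<bar>C\<bar> + 1) * \<bar>h w\<bar>" by (intro mult_right_mono) auto
    finally show "norm (supnorm (g w)) \<le> (\<bar>C\<bar> + 1) * norm (h w)" by simp
  qed
qed simp

lemma abs_fdiff_le:
  assumes "\<And>x. \<bar>f x\<bar> \<le> B"
  shows "\<bar>fdiff m f t x\<bar> \<le> 2 ^ m * B"
proof -
  have "\<bar>fdiff m f t x\<bar> \<le> (\<Sum>j=0..m. \<bar>real (m choose j) * (-1) ^ (m - j) * f (x + real j * t)\<bar>)"
    unfolding fdiff_def by (rule sum_abs)
  also have "\<dots> \<le> (\<Sum>j=0..m. real (m choose j) * B)"
    by (intro sum_mono) (auto simp: abs_mult power_abs intro: mult_left_mono assms)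
  also have "\<dots> = 2 ^ m * B"
    using choose_row_sum[of m] by (simp add: atLeast0AtMost flip: sum_distrib_right of_nat_sum)
  finally show ?thesis .
qed

lemma fdiff_step_0:
  assumes "m \<ge> 1" shows "fdiff m f 0 x = 0"
proof -
  have "(\<Sum>j=0..m. real (m choose j) * (-1) ^ (m - j)) = (1 + (-1::real)) ^ m"
    using binomial_ring[of "1::real" "-1" m] by (simp add: atLeast0AtMost)
  then show ?thesis using assms unfolding fdiff_def by (simp flip: sum_distrib_right)
qed

lemma fdiff_Suc: "fdiff (Suc m) g b x = fdiff m g b (x + b) - fdiff m g b x"
proof -
  let ?t = "\<lambda>j. g (x + real j * b)"
  have "fdiff (Suc m) g b x = (-1) ^ Suc m * g x +
      (\<Sum>j=0..m. real (Suc m choose Suc j) * (-1) ^ (m - j) * ?t (Suc j))"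
    unfolding fdiff_def by (subst sum.atLeast0_atMost_Suc_shift) simp
  also have "(\<Sum>j=0..m. real (Suc m choose Suc j) * (-1) ^ (m - j) * ?t (Suc j)) =
      (\<Sum>j=0..m. real (m choose j) * (-1) ^ (m - j) * ?t (Suc j)) +
      (\<Sum>j=0..m. real (m choose Suc j) * (-1) ^ (m - j) * ?t (Suc j))"
    by (simp add: sum.distrib[symmetric] algebra_simps)
  also have "(\<Sum>j=0..m. real (m choose j) * (-1) ^ (m - j) * ?t (Suc j)) = fdiff m g b (x + b)"
    unfolding fdiff_def by (intro sum.cong) (auto simp: algebra_simps)
  finally have shifted: "fdiff (Suc m) g b x = (-1) ^ Suc m * g x + fdiff m g b (x + b) +
      (\<Sum>j=0..m. real (m choose Suc j) * (-1) ^ (m - j) * ?t (Suc j))" by simp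
  have "fdiff m g b x = (\<Sum>j=0..Suc m. real (m choose j) * (-1) ^ (m - j) * ?t j)"
    unfolding fdiff_def by (subst sum.atLeast0_atMost_Suc) simp
  also have "\<dots> = (-1) ^ m * g x + (\<Sum>j=0..m. real (m choose Suc j) * (-1) ^ (m - Suc j) * ?t (Suc j))"
    by (subst sum.atLeast0_atMost_Suc_shift) simp
  finally have unshifted: "fdiff m g b x =
      (-1) ^ m * g x + (\<Sum>j=0..m. real (m choose Suc j) * (-1) ^ (m - Suc j) * ?t (Suc j))" .
  have "real (m choose Suc j) * (-1) ^ (m - j) * ?t (Suc j) =
      - (real (m choose Suc j) * (-1) ^ (m - Suc j) * ?t (Suc j))" if "j \<le> m" for j
  proof (cases "j < m")
    case True
    then have "m - j = Suc (m - Suc j)" by simp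
    then show ?thesis by simp
  qed (use that in simp)
  then have "(\<Sum>j=0..m. real (m choose Suc j) * (-1) ^ (m - j) * ?t (Suc j)) =
      - (\<Sum>j=0..m. real (m choose Suc j) * (-1) ^ (m - Suc j) * ?t (Suc j))"
    by (simp add: sum_negf[symmetric])
  with shifted unshifted show ?thesis by simp
qed

lemma fdiff_eq_signed_sum:
  "(-1) ^ m * fdiff m f t x = (\<Sum>j=0..m. (-1) ^ j * real (m choose j) * f (x + real j * t))"
proof -
  have "(-1) ^ m * (real (m choose j) * (-1) ^ (m - j) * f (x + real j * t)) =
      (-1) ^ j * real (m choose j) * f (x + real j * t)" if "j \<le> m" for j
  proof -
    have exponent: "m + (m - j) = j + 2 * (m - j)" using that by simp
    have "(-1::real) ^ m * (-1) ^ (m - j) = (-1) ^ (j + 2 * (m - j))"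
      by (simp only: power_add[symmetric] exponent)
    then have sign: "(-1::real) ^ m * (-1) ^ (m - j) = (-1) ^ j" by (simp add: power_add power_mult)
    have "(-1) ^ m * (real (m choose j) * (-1) ^ (m - j) * f (x + real j * t)) =
        ((-1) ^ m * (-1) ^ (m - j)) * real (m choose j) * f (x + real j * t)"
      by (simp only: mult_ac)
    then show ?thesis unfolding sign .
  qed
  then show ?thesis unfolding fdiff_def sum_distrib_left by (intro sum.cong) auto
qed

lemma LipStar_fdiff_bound:
  assumes "LipStar \<alpha> f"
  obtains K \<delta> where "K \<ge> 0" "\<delta> > 0"
    "\<And>t x. 0 \<le> t \<Longrightarrow> t < \<delta> \<Longrightarrow> \<bar>fdiff (nat \<lfloor>\<alpha>\<rfloor> + 1) f t x\<bar> \<le> K * t powr \<alpha>"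
proof -
  define m where "m = nat \<lfloor>\<alpha>\<rfloor> + 1"
  from assms have "bucont f" and O: "(\<lambda>\<delta>. modsmooth m f \<delta>) \<in> O[at_right 0](\<lambda>\<delta>. \<delta> powr \<alpha>)"
    unfolding LipStar_def m_def by auto
  from \<open>bucont f\<close> obtain Bf where Bf: "\<And>x. \<bar>f x\<bar> \<le> Bf"
    unfolding bucont_def bounded_iff by auto
  from O obtain c where "c > 0" "eventually (\<lambda>\<delta>. norm (modsmooth m f \<delta>) \<le> c * norm (\<delta> powr \<alpha>)) (at_right 0)"
    by (elim landau_o.bigE)
  then obtain \<delta> where \<delta>: "\<delta> > 0" "\<And>t. t > 0 \<Longrightarrow> t < \<delta> \<Longrightarrow> \<bar>modsmooth m f t\<bar> \<le> c * \<bar>t powr \<alpha>\<bar>"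
    by (auto simp: eventually_at_right_field)
  have "\<bar>fdiff m f t x\<bar> \<le> c * t powr \<alpha>" if "0 \<le> t" "t < \<delta>" for t x
  proof (cases "t = 0")
    case True then show ?thesis using fdiff_step_0[of m f x] m_def by simp
  next
    case False
    have bdd: "bdd_above (range (\<lambda>x. \<bar>fdiff m f s x\<bar>))" for s
      by (rule bdd_aboveI[where M="2 ^ m * Bf"]) (auto intro: abs_fdiff_le Bf)
    have "\<bar>fdiff m f t x\<bar> \<le> supnorm (fdiff m f t)" unfolding supnorm_def by (rule cSUP_upper[OF _ bdd]) simp
    also have "\<dots> \<le> modsmooth m f t"
    proof -
      have "bdd_above ((\<lambda>s. supnorm (fdiff m f s)) ` {-t..t})"
        by (rule bdd_aboveI2[where M="2 ^ m * Bf"])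
          (auto simp: supnorm_def intro!: cSUP_least abs_fdiff_le Bf)
      then show ?thesis unfolding modsmooth_def by (rule cSUP_upper[rotated]) (use that in auto)
    qed
    also have "\<dots> \<le> c * t powr \<alpha>" using \<delta>(2)[of t] that False by simp
    finally show ?thesis .
  qed
  with \<open>c > 0\<close> \<delta>(1) that show ?thesis unfolding m_def by (meson less_imp_le)
qed

section \<open>Steklov means\<close>

definition antideriv :: "(real \<Rightarrow> real) \<Rightarrow> real \<Rightarrow> real" where
  "antideriv g = (SOME G. \<forall>x. (G has_real_derivative g x) (at x))"

definition steklov :: "real \<Rightarrow> (real \<Rightarrow> real) \<Rightarrow> real \<Rightarrow> real" where
  "steklov b g x = (antideriv g (x + b) - antideriv g x) / b"

definition diffquot :: "real \<Rightarrow> (real \<Rightarrow> real) \<Rightarrow> real \<Rightarrow> real" where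
  "diffquot b g x = (g (x + b) - g x) / b"

lemma has_real_derivative_antideriv:
  assumes "continuous_on UNIV g"
  shows "(antideriv g has_real_derivative g x) (at x)"
proof -
  have "\<exists>F. \<forall>x::real. (-\<infinity>::ereal) < ereal x \<longrightarrow> ereal x < \<infinity> \<longrightarrow> (F has_vector_derivative g x) (at x)"
    by (rule einterval_antiderivative) (use assms in \<open>auto simp: continuous_on_eq_continuous_at\<close>)
  then have "\<exists>G. \<forall>x. (G has_real_derivative g x) (at x)"
    by (auto simp: has_real_derivative_iff_has_vector_derivative)
  from someI_ex[OF this] show ?thesis unfolding antideriv_def by blast
qed

lemma steklov_eq:
  assumes "continuous_on UNIV g" "\<And>x. (G has_real_derivative g x) (at x)"
  shows "steklov b g x = (G (x + b) - G x) / b"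
proof -
  have "\<forall>y. ((\<lambda>y. antideriv g y - G y) has_real_derivative 0) (at y)"
    using DERIV_diff[OF has_real_derivative_antideriv[OF assms(1)] assms(2)] by fastforce
  from DERIV_isconst_all[OF this, of "x + b" x]
  show ?thesis unfolding steklov_def by (simp add: algebra_simps)
qed

lemma has_real_derivative_steklov:
  assumes "continuous_on UNIV g"
  shows "(steklov b g has_real_derivative diffquot b g x) (at x)"
proof -
  have shifted: "((\<lambda>x. antideriv g (x + b)) has_real_derivative g (x + b)) (at x)"
    using DERIV_chain2[OF has_real_derivative_antideriv[OF assms] DERIV_add[OF DERIV_ident DERIV_const[of b]]]
    by simp
  show ?thesis unfolding steklov_def[abs_def] diffquot_def
    by (intro DERIV_cdivide DERIV_diff shifted has_real_derivative_antideriv[OF assms])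
qed

lemma continuous_on_steklov:
  assumes "continuous_on UNIV g" shows "continuous_on UNIV (steklov b g)"
  using has_real_derivative_steklov[OF assms] DERIV_isCont continuous_at_imp_continuous_on by blast

lemma abs_steklov_le:
  assumes "b > 0" "continuous_on UNIV g" "\<And>t. x \<le> t \<Longrightarrow> t \<le> x + b \<Longrightarrow> \<bar>g t\<bar> \<le> B"
  shows "\<bar>steklov b g x\<bar> \<le> B"
proof -
  obtain z where z: "x < z" "z < x + b" "antideriv g (x + b) - antideriv g x = (x + b - x) * g z"
    using MVT2[of x "x + b" "antideriv g" g] has_real_derivative_antideriv[OF assms(2)] assms(1) by auto
  then have "steklov b g x = g z" unfolding steklov_def using assms(1) by simp
  then show ?thesis using assms(3)[of z] z by simp
qed

lemma steklov_sum:
  assumes "finite J" "\<And>j. j \<in> J \<Longrightarrow> continuous_on UNIV (h j)"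
  shows "steklov b (\<lambda>y. \<Sum>j\<in>J. c j * h j y) x = (\<Sum>j\<in>J. c j * steklov b (h j) x)"
proof -
  have "continuous_on UNIV (\<lambda>y. \<Sum>j\<in>J. c j * h j y)"
    using assms(2) by (intro continuous_intros) auto
  moreover have "((\<lambda>y. \<Sum>j\<in>J. c j * antideriv (h j) y) has_real_derivative (\<Sum>j\<in>J. c j * h j y)) (at y)" for y
    by (intro DERIV_sum DERIV_cmult has_real_derivative_antideriv assms(2))
  ultimately have "steklov b (\<lambda>y. \<Sum>j\<in>J. c j * h j y) x =
      ((\<Sum>j\<in>J. c j * antideriv (h j) (x + b)) - (\<Sum>j\<in>J. c j * antideriv (h j) x)) / b"
    by (rule steklov_eq)
  also have "\<dots> = (\<Sum>j\<in>J. c j * steklov b (h j) x)"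
    unfolding steklov_def by (simp add: sum_subtractf[symmetric] sum_divide_distrib algebra_simps)
  finally show ?thesis .
qed

lemma steklov_const:
  assumes "b \<noteq> 0" shows "steklov b (\<lambda>y. c) x = c"
proof -
  have "steklov b (\<lambda>y. c) x = (c * (x + b) - c * x) / b"
    by (rule steklov_eq) (auto intro!: derivative_eq_intros)
  then show ?thesis using assms by (simp add: algebra_simps)
qed

lemma steklov_rescale:
  assumes "j \<noteq> 0" "continuous_on UNIV h"
  shows "steklov b (\<lambda>u. h (z + j * u)) s = steklov (j * b) h (z + j * s)"
proof -
  have "continuous_on UNIV (\<lambda>u. h (z + j * u))"
    by (rule continuous_on_compose2[OF assms(2)]) (auto intro: continuous_intros)
  moreover have "((\<lambda>u. antideriv h (z + j * u) / j) has_real_derivative h (z + j * u)) (at u)" for u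
  proof -
    have "((\<lambda>u. antideriv h (z + j * u)) has_real_derivative h (z + j * u) * j) (at u)"
      by (rule DERIV_chain2[OF has_real_derivative_antideriv[OF assms(2)]]) (auto intro!: derivative_eq_intros)
    from DERIV_cdivide[OF this, of j] show ?thesis using assms(1) by simp
  qed
  ultimately have "steklov b (\<lambda>u. h (z + j * u)) s = (antideriv h (z + j * (s + b)) / j - antideriv h (z + j * s) / j) / b"
    by (rule steklov_eq)
  also have "\<dots> = steklov (j * b) h (z + j * s)"
    unfolding steklov_def using assms(1) by (simp add: field_simps)
  finally show ?thesis .
qed

lemma continuous_on_steklov_iter:
  "continuous_on UNIV g \<Longrightarrow> continuous_on UNIV ((steklov b ^^ m) g)"
  by (induction m) (auto intro: continuous_on_steklov)

lemma abs_steklov_iter_le: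
  assumes "b > 0" "continuous_on UNIV g" "\<And>t. x \<le> t \<Longrightarrow> t \<le> x + real m * b \<Longrightarrow> \<bar>g t\<bar> \<le> B"
  shows "\<bar>(steklov b ^^ m) g x\<bar> \<le> B"
  using assms(3)
proof (induction m arbitrary: x)
  case (Suc m)
  show ?case unfolding funpow.simps o_def
  proof (rule abs_steklov_le[OF assms(1) continuous_on_steklov_iter[OF assms(2)]])
    fix t assume t: "x \<le> t" "t \<le> x + b"
    show "\<bar>(steklov b ^^ m) g t\<bar> \<le> B"
    proof (rule Suc.IH)
      fix t' assume "t \<le> t'" "t' \<le> t + real m * b"
      then show "\<bar>g t'\<bar> \<le> B" using t by (intro Suc.prems) (auto simp: algebra_simps)
    qed
  qed
qed simp

lemma steklov_iter_const: "b \<noteq> 0 \<Longrightarrow> (steklov b ^^ m) (\<lambda>y. c) = (\<lambda>y. c)"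
  by (induction m) (auto simp: steklov_const)

lemma steklov_iter_rescale:
  assumes "j \<noteq> 0" "continuous_on UNIV h"
  shows "(steklov b ^^ m) (\<lambda>u. h (z + j * u)) s = (steklov (j * b) ^^ m) h (z + j * s)"
proof (induction m arbitrary: s)
  case (Suc m)
  have "(steklov b ^^ m) (\<lambda>u. h (z + j * u)) = (\<lambda>u. (steklov (j * b) ^^ m) h (z + j * u))"
    using Suc.IH by auto
  then show ?case unfolding funpow.simps o_def
    by (simp only:) (rule steklov_rescale[OF assms(1) continuous_on_steklov_iter[OF assms(2)]])
qed simp

lemma steklov_iter_sum:
  assumes "finite J" "\<And>j. j \<in> J \<Longrightarrow> continuous_on UNIV (h j)"
  shows "(steklov b ^^ m) (\<lambda>y. \<Sum>j\<in>J. c j * h j y) x = (\<Sum>j\<in>J. c j * (steklov b ^^ m) (h j) x)"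
proof (induction m arbitrary: x)
  case (Suc m)
  have "(steklov b ^^ m) (\<lambda>y. \<Sum>j\<in>J. c j * h j y) = (\<lambda>y. \<Sum>j\<in>J. c j * (steklov b ^^ m) (h j) y)"
    using Suc.IH by auto
  then show ?case unfolding funpow.simps o_def
    by (simp only:) (rule steklov_sum[OF assms(1) continuous_on_steklov_iter[OF assms(2)]])
qed simp

lemma has_real_derivative_diffquot_iter:
  assumes "\<And>x. (h has_real_derivative h' x) (at x)"
  shows "((diffquot b ^^ i) h has_real_derivative (diffquot b ^^ i) h' x) (at x)"
proof (induction i arbitrary: x)
  case (Suc i)
  have shifted: "((\<lambda>x. (diffquot b ^^ i) h (x + b)) has_real_derivative (diffquot b ^^ i) h' (x + b)) (at x)"
    using DERIV_chain2[OF Suc.IH DERIV_add[OF DERIV_ident DERIV_const[of b]]] by simp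
  show ?case unfolding funpow.simps o_def diffquot_def[of b "(diffquot b ^^ i) h"] diffquot_def[of b "(diffquot b ^^ i) h'"]
    by (intro DERIV_cdivide DERIV_diff shifted Suc.IH)
qed (use assms in simp)

lemma diffquot_iter_eq_fdiff:
  assumes "b \<noteq> 0"
  shows "(diffquot b ^^ m) g x = fdiff m g b x / b ^ m"
proof (induction m arbitrary: x)
  case (Suc m)
  have "(diffquot b ^^ Suc m) g x = ((diffquot b ^^ m) g (x + b) - (diffquot b ^^ m) g x) / b"
    by (simp add: diffquot_def)
  also have "\<dots> = fdiff (Suc m) g b x / b ^ Suc m"
    unfolding Suc.IH fdiff_Suc using assms by (simp add: field_simps)
  finally show ?case .
qed (simp add: fdiff_def)

definition steklov_derivs :: "real \<Rightarrow> nat \<Rightarrow> (real \<Rightarrow> real) \<Rightarrow> nat \<Rightarrow> real \<Rightarrow> real" where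
  "steklov_derivs b m g i = (diffquot b ^^ i) ((steklov b ^^ (m - i)) g)"

lemma has_real_derivative_steklov_derivs:
  assumes "continuous_on UNIV g" "i < m"
  shows "(steklov_derivs b m g i has_real_derivative steklov_derivs b m g (Suc i) x) (at x)"
proof -
  obtain n where n: "m - i = Suc n" "m - Suc i = n" using assms(2) by (metis Suc_diff_Suc)
  have "((steklov b ^^ Suc n) g has_real_derivative diffquot b ((steklov b ^^ n) g) y) (at y)" for y
    unfolding funpow.simps o_def by (rule has_real_derivative_steklov[OF continuous_on_steklov_iter[OF assms(1)]])
  from has_real_derivative_diffquot_iter[OF this]
  have "((diffquot b ^^ i) ((steklov b ^^ Suc n) g) has_real_derivative
      (diffquot b ^^ i) (diffquot b ((steklov b ^^ n) g)) x) (at x)" .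
  then show ?thesis unfolding steklov_derivs_def n by (simp only: funpow_Suc_right o_def)
qed

text \<open>\<open>smoothing_deriv m a f 0\<close> is the classical smooth approximant showing that the
  \<open>K\<close>-functional of order \<open>m\<close> is dominated by \<open>\<omega>\<^sub>m(f, m a)\<close>; \<open>smoothing_deriv m a f i\<close> is its
  \<open>i\<close>-th derivative.\<close>
definition smoothing_deriv :: "nat \<Rightarrow> real \<Rightarrow> (real \<Rightarrow> real) \<Rightarrow> nat \<Rightarrow> real \<Rightarrow> real" where
  "smoothing_deriv m a f i =
     (\<lambda>y. - (\<Sum>j=1..m. (-1) ^ j * real (m choose j) * steklov_derivs (real j * a) m f i y))"

lemma sum_binomial_from_1_le: "(\<Sum>j=1..m. real (m choose j)) \<le> 2 ^ m"
proof -
  have "(\<Sum>j=1..m. real (m choose j)) \<le> (\<Sum>j\<le>m. real (m choose j))"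
    by (intro sum_mono2) auto
  also have "\<dots> = 2 ^ m" using choose_row_sum[of m] by (simp flip: of_nat_sum)
  finally show ?thesis .
qed

lemma has_real_derivative_smoothing_deriv:
  assumes "continuous_on UNIV f" "i < m"
  shows "(smoothing_deriv m a f i has_real_derivative smoothing_deriv m a f (Suc i) x) (at x)"
  unfolding smoothing_deriv_def
  by (intro DERIV_minus DERIV_sum DERIV_cmult has_real_derivative_steklov_derivs[OF assms])

lemma continuous_on_smoothing:
  assumes "continuous_on UNIV f" shows "continuous_on UNIV (smoothing_deriv m a f 0)"
  unfolding smoothing_deriv_def steklov_derivs_def
  by (simp, intro continuous_intros continuous_on_steklov_iter assms)

lemma abs_smoothing_le:
  assumes "a > 0" "continuous_on UNIV f" "\<And>y. \<bar>f y\<bar> \<le> B"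
  shows "\<bar>smoothing_deriv m a f 0 y\<bar> \<le> 2 ^ m * B"
proof -
  have B: "B \<ge> 0" using assms(3)[of 0] by linarith
  have "\<bar>smoothing_deriv m a f 0 y\<bar> \<le> (\<Sum>j=1..m. \<bar>(-1) ^ j * real (m choose j) * (steklov (real j * a) ^^ m) f y\<bar>)"
    unfolding smoothing_deriv_def steklov_derivs_def by (simp only: abs_minus_cancel funpow_0 diff_zero) (rule sum_abs)
  also have "\<dots> \<le> (\<Sum>j=1..m. real (m choose j) * B)"
    using assms by (intro sum_mono) (auto simp: abs_mult intro!: mult_left_mono abs_steklov_iter_le)
  also have "\<dots> \<le> 2 ^ m * B"
    using mult_right_mono[OF sum_binomial_from_1_le B] by (simp add: sum_distrib_right)
  finally show ?thesis .
qed

lemma continuous_on_fdiff_step: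
  assumes "continuous_on UNIV f" shows "continuous_on UNIV (\<lambda>u. fdiff m f u y)"
  unfolding fdiff_def
  by (intro continuous_intros continuous_on_compose2[OF assms]) (auto intro: continuous_intros)

lemma smoothing_error_eq:
  assumes "a > 0" "continuous_on UNIV f"
  shows "f y - smoothing_deriv m a f 0 y = (-1) ^ m * (steklov a ^^ m) (\<lambda>u. fdiff m f u y) 0"
proof -
  let ?c = "\<lambda>j. (-1) ^ j * real (m choose j)"
  have cont: "continuous_on UNIV (\<lambda>u. f (y + real j * u))" for j
    by (rule continuous_on_compose2[OF assms(2)]) (auto intro: continuous_intros)
  have "(-1) ^ m * (steklov a ^^ m) (\<lambda>u. fdiff m f u y) 0 =
      (steklov a ^^ m) (\<lambda>u. (-1) ^ m * fdiff m f u y) 0"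
    using steklov_iter_sum[where J="{0::nat}" and h="\<lambda>_ u. fdiff m f u y" and b=a and c="\<lambda>_. (-1) ^ m" and x=0]
      continuous_on_fdiff_step[OF assms(2)] by simp
  also have "(\<lambda>u. (-1) ^ m * fdiff m f u y) = (\<lambda>u. \<Sum>j=0..m. ?c j * f (y + real j * u))"
    by (simp only: fdiff_eq_signed_sum)
  also have "(steklov a ^^ m) \<dots> 0 = (\<Sum>j=0..m. ?c j * (steklov a ^^ m) (\<lambda>u. f (y + real j * u)) 0)"
    by (rule steklov_iter_sum) (auto intro: cont)
  also have "\<dots> = f y + (\<Sum>j=1..m. ?c j * (steklov (real j * a) ^^ m) f y)"
  proof -
    have "(steklov a ^^ m) (\<lambda>u. f (y + real j * u)) 0 = (steklov (real j * a) ^^ m) f y" if "j \<ge> 1" for j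
      using steklov_iter_rescale[where j="real j" and h=f and b=a and z=y and s=0] that assms(2) by simp
    moreover have "(steklov a ^^ m) (\<lambda>u. f (y + real 0 * u)) 0 = f y"
      using steklov_iter_const[of a m "f y"] assms(1) by simp
    ultimately show ?thesis by (simp add: sum.atLeast_Suc_atMost)
  qed
  finally show ?thesis unfolding smoothing_deriv_def steklov_derivs_def by simp
qed

lemma abs_smoothing_error_le:
  assumes "a > 0" "continuous_on UNIV f" "\<alpha> \<ge> 0" "K \<ge> 0"
    and "\<And>t y. 0 \<le> t \<Longrightarrow> t \<le> real m * a \<Longrightarrow> \<bar>fdiff m f t y\<bar> \<le> K * t powr \<alpha>"
  shows "\<bar>f y - smoothing_deriv m a f 0 y\<bar> \<le> K * (real m * a) powr \<alpha>"
proof -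
  from continuous_on_fdiff_step[OF assms(2)]
  have "\<bar>(steklov a ^^ m) (\<lambda>u. fdiff m f u y) 0\<bar> \<le> K * (real m * a) powr \<alpha>"
  proof (rule abs_steklov_iter_le[OF assms(1)])
    fix t assume "0 \<le> t" "t \<le> 0 + real m * a"
    then show "\<bar>fdiff m f t y\<bar> \<le> K * (real m * a) powr \<alpha>"
      using assms(5)[of t y] mult_left_mono[OF powr_mono2[OF assms(3), of t "real m * a"] assms(4)] by simp
  qed
  then show ?thesis unfolding smoothing_error_eq[OF assms(1,2)] by (simp add: abs_mult)
qed

lemma abs_smoothing_deriv_top_le:
  assumes "a > 0" "\<alpha> \<le> real m" "K \<ge> 0"
    and "\<And>t y. 0 \<le> t \<Longrightarrow> t \<le> real m * a \<Longrightarrow> \<bar>fdiff m f t y\<bar> \<le> K * t powr \<alpha>"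
  shows "\<bar>smoothing_deriv m a f m y\<bar> \<le> 2 ^ m * K * a powr (\<alpha> - real m)"
proof -
  have term_le: "\<bar>(-1) ^ j * real (m choose j) * steklov_derivs (real j * a) m f m y\<bar> \<le>
      real (m choose j) * (K * a powr (\<alpha> - real m))" if j: "j \<in> {1..m}" for j
  proof -
    define b where "b = real j * a"
    have b: "b > 0" "a \<le> b" "b \<le> real m * a" unfolding b_def using j assms(1) by auto
    have "\<bar>steklov_derivs b m f m y\<bar> = \<bar>fdiff m f b y\<bar> / b ^ m"
      unfolding steklov_derivs_def using diffquot_iter_eq_fdiff[of b m f y] b by (simp add: abs_divide)
    also have "\<dots> \<le> K * b powr \<alpha> / b ^ m"
      by (intro divide_right_mono assms(4)) (use b in auto)
    also have "\<dots> = K * b powr (\<alpha> - real m)" using b by (simp add: powr_diff powr_realpow)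
    also have "\<dots> \<le> K * a powr (\<alpha> - real m)"
      by (intro mult_left_mono powr_mono2') (use assms b in auto)
    finally show ?thesis unfolding b_def by (simp add: abs_mult mult_left_mono)
  qed
  have "\<bar>smoothing_deriv m a f m y\<bar> \<le> (\<Sum>j=1..m. \<bar>(-1) ^ j * real (m choose j) * steklov_derivs (real j * a) m f m y\<bar>)"
    unfolding smoothing_deriv_def by (simp only: abs_minus_cancel) (rule sum_abs)
  also have "\<dots> \<le> (\<Sum>j=1..m. real (m choose j)) * (K * a powr (\<alpha> - real m))"
    unfolding sum_distrib_right by (intro sum_mono term_le)
  also have "\<dots> \<le> 2 ^ m * K * a powr (\<alpha> - real m)"
    using mult_right_mono[OF sum_binomial_from_1_le, of "K * a powr (\<alpha> - real m)" m] assms(3)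
    by (simp add: mult.assoc)
  finally show ?thesis .
qed

section \<open>The Durrmeyer sampling operators\<close>

definition abs_dmoment :: "(real \<Rightarrow> real) \<Rightarrow> nat \<Rightarrow> real" where
  "abs_dmoment \<phi> \<nu> = (SUP u. \<Sum>\<^sub>\<infinity>k::int. \<bar>\<phi> (u - of_int k)\<bar> * \<bar>of_int k - u\<bar> ^ \<nu>)"

definition abs_cmoment :: "(real \<Rightarrow> real) \<Rightarrow> nat \<Rightarrow> real" where
  "abs_cmoment \<psi> \<nu> = (LINT v|lborel. \<bar>v\<bar> ^ \<nu> * \<bar>\<psi> v\<bar>)"

lemma abs_cmoment_nonneg: "abs_cmoment \<psi> \<nu> \<ge> 0"
  unfolding abs_cmoment_def by (rule integral_nonneg_AE) auto

lemma durrmeyer_rescaled: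
  assumes "w > 0"
  shows "durrmeyer \<phi> \<psi> w g x =
    (\<Sum>\<^sub>\<infinity>k::int. \<phi> (w * x - real_of_int k) * (LINT v|lborel. \<psi> v * g ((v + real_of_int k) / w)))"
  unfolding durrmeyer_def
proof (intro infsum_cong arg_cong2[where f="(*)"] refl)
  fix k :: int
  have "(LINT u|lborel. \<psi> (w * u - real_of_int k) * g u) =
    \<bar>1/w\<bar> *\<^sub>R (LINT v|lborel. \<psi> (w * (real_of_int k / w + (1/w) * v) - real_of_int k) * g (real_of_int k / w + (1/w) * v))"
    by (rule lborel_integral_real_affine) (use assms in simp)
  also have "\<dots> = (1/w) * (LINT v|lborel. \<psi> v * g ((v + real_of_int k) / w))"
    using assms by (simp add: field_simps add.commute)
  finally show "w * (LINT u|lborel. \<psi> (w * u - real_of_int k) * g u) = (LINT v|lborel. \<psi> v * g ((v + real_of_int k) / w))"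
    using assms by simp
qed

locale durrmeyer_kernels =
  fixes r :: nat and \<phi> \<psi> :: "real \<Rightarrow> real" and \<theta> :: real
  assumes r_ge_2: "r \<ge> 2" and discrete: "discrete_kernel \<phi>" and continuous: "continuous_kernel \<psi>"
    and moments_indep: "cond_i r \<phi>" and moments_vanish: "cond_ii r \<phi> \<psi>" and decay_order: "\<theta> > real r + 1"
    and phi_decay: "cond_Theta \<theta> \<phi>" and psi_decay: "cond_Theta \<theta> \<psi>"
begin

lemma psi_integrable: "integrable lborel \<psi>"
  using continuous unfolding continuous_kernel_def by auto

lemma psi_measurable[measurable]: "\<psi> \<in> borel_measurable borel"
  using borel_measurable_integrable[OF psi_integrable] by simp

lemma dmoment_0: "dmoment \<phi> 0 u = 1"
  using discrete unfolding discrete_kernel_def dmoment_def by (auto intro: infsumI)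

lemma cmoment_0: "cmoment \<psi> 0 = 1"
  using continuous unfolding continuous_kernel_def cmoment_def by simp

lemma abs_dmoment_sum_bounded:
  assumes "j \<le> r"
  obtains A where "\<And>u. (\<lambda>k::int. \<bar>\<phi> (u - real_of_int k)\<bar> * \<bar>real_of_int k - u\<bar> ^ j) summable_on UNIV"
    "\<And>u. infsum (\<lambda>k::int. \<bar>\<phi> (u - real_of_int k)\<bar> * \<bar>real_of_int k - u\<bar> ^ j) UNIV \<le> A"
proof -
  have "bounded (range \<phi>)" using discrete unfolding discrete_kernel_def by auto
  moreover have "real j + 1 < \<theta>" using assms decay_order by linarith
  ultimately show ?thesis using cond_Theta_moment_sum_bounded[OF _ phi_decay] that by blast
qed

lemma summable_abs_dmoment:
  "j \<le> r \<Longrightarrow> (\<lambda>k::int. \<bar>\<phi> (u - real_of_int k)\<bar> * \<bar>real_of_int k - u\<bar> ^ j) summable_on UNIV"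
proof -
  assume "j \<le> r"
  from abs_dmoment_sum_bounded[OF this] show ?thesis by blast
qed

lemma le_abs_dmoment:
  assumes "j \<le> r"
  shows "infsum (\<lambda>k::int. \<bar>\<phi> (u - real_of_int k)\<bar> * \<bar>real_of_int k - u\<bar> ^ j) UNIV \<le> abs_dmoment \<phi> j"
proof -
  obtain A where "\<And>u. infsum (\<lambda>k::int. \<bar>\<phi> (u - real_of_int k)\<bar> * \<bar>real_of_int k - u\<bar> ^ j) UNIV \<le> A"
    using abs_dmoment_sum_bounded[OF assms] by blast
  then have "bdd_above (range (\<lambda>u. infsum (\<lambda>k::int. \<bar>\<phi> (u - real_of_int k)\<bar> * \<bar>real_of_int k - u\<bar> ^ j) UNIV))"
    by (intro bdd_aboveI2)
  then show ?thesis unfolding abs_dmoment_def by (rule cSUP_upper[rotated]) simp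
qed

lemma summable_dmoment:
  "j \<le> r \<Longrightarrow> (\<lambda>k::int. \<phi> (u - real_of_int k) * (real_of_int k - u) ^ j) summable_on UNIV"
  by (rule abs_infsum_le_comparison(1)[OF summable_abs_dmoment]) (auto simp: abs_mult power_abs)

lemma integrable_abs_cmoment: "j \<le> r \<Longrightarrow> integrable lborel (\<lambda>v. \<bar>v\<bar> ^ j * \<bar>\<psi> v\<bar>)"
  using cond_Theta_integrable_moment[OF psi_integrable psi_decay] decay_order by simp

lemma integrable_cmoment: "j \<le> r \<Longrightarrow> integrable lborel (\<lambda>v. v ^ j * \<psi> v)"
  by (rule Bochner_Integration.integrable_bound[OF integrable_abs_cmoment]) (auto simp: abs_mult power_abs)

lemma moment_condition:
  assumes "i < r"
  shows "(\<Sum>\<nu>=0..i. real (i choose \<nu>) * cmoment \<psi> \<nu> * dmoment \<phi> (i - \<nu>) u) = (if i = 0 then 1 else 0)"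
proof (cases "i = 0")
  case False
  have "dmoment \<phi> (i - \<nu>) u = dmoment \<phi> (i - \<nu>) 0" if "\<nu> \<le> i" for \<nu>
  proof (cases "\<nu> = i")
    case False
    then have "i - \<nu> \<in> {1..r}" using that assms by auto
    then show ?thesis using moments_indep unfolding cond_i_def by blast
  qed (simp add: dmoment_0)
  then have "(\<Sum>\<nu>=0..i. real (i choose \<nu>) * cmoment \<psi> \<nu> * dmoment \<phi> (i - \<nu>) u) =
      (\<Sum>\<nu>=0..i. real (i choose \<nu>) * dmoment \<phi> (i - \<nu>) 0 * cmoment \<psi> \<nu>)"
    by (intro sum.cong) auto
  also have "\<dots> = 0" using moments_vanish False assms unfolding cond_ii_def by auto
  finally show ?thesis using False by simp
qed (simp add: dmoment_0 cmoment_0)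

lemma borel_measurable_psi_comp:
  assumes "continuous_on UNIV g"
  shows "(\<lambda>v. \<psi> v * g ((v + c) / w)) \<in> borel_measurable lborel"
proof -
  have "continuous_on UNIV (\<lambda>v::real. (v + c) / w)"
    unfolding divide_inverse by (intro continuous_intros)
  then have "continuous_on UNIV (\<lambda>v. g ((v + c) / w))"
    by (rule continuous_on_compose2[OF assms]) auto
  then have "(\<lambda>v. g ((v + c) / w)) \<in> borel_measurable borel"
    by (rule borel_measurable_continuous_onI)
  then show ?thesis by simp
qed

lemma integrable_psi_comp:
  assumes "continuous_on UNIV g" "\<And>y. \<bar>g y\<bar> \<le> B"
  shows "integrable lborel (\<lambda>v. \<psi> v * g ((v + c) / w))"
    and "\<bar>LINT v|lborel. \<psi> v * g ((v + c) / w)\<bar> \<le> B * abs_cmoment \<psi> 0"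
proof -
  have bound: "\<bar>\<psi> v * g ((v + c) / w)\<bar> \<le> B * \<bar>\<psi> v\<bar>" for v
    unfolding abs_mult using mult_left_mono[OF assms(2), of "\<bar>\<psi> v\<bar>"] by (simp add: mult.commute)
  have major: "integrable lborel (\<lambda>v. B * \<bar>\<psi> v\<bar>)" using psi_integrable by auto
  show int: "integrable lborel (\<lambda>v. \<psi> v * g ((v + c) / w))"
    by (rule Bochner_Integration.integrable_bound[OF major borel_measurable_psi_comp[OF assms(1)]])
      (auto intro!: AE_I2 order_trans[OF bound abs_ge_self])
  have "\<bar>LINT v|lborel. \<psi> v * g ((v + c) / w)\<bar> \<le> (LINT v|lborel. B * \<bar>\<psi> v\<bar>)"
    by (rule integral_abs_bound_integral[OF int major bound])
  then show "\<bar>LINT v|lborel. \<psi> v * g ((v + c) / w)\<bar> \<le> B * abs_cmoment \<psi> 0"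
    unfolding abs_cmoment_def by simp
qed

lemma abs_durrmeyer_le:
  assumes "w > 0" "continuous_on UNIV g" "\<And>y. \<bar>g y\<bar> \<le> B"
  shows "(\<lambda>k::int. \<phi> (w * x - real_of_int k) * (LINT v|lborel. \<psi> v * g ((v + real_of_int k) / w))) summable_on UNIV"
    and "\<bar>durrmeyer \<phi> \<psi> w g x\<bar> \<le> abs_dmoment \<phi> 0 * abs_cmoment \<psi> 0 * B"
proof -
  let ?u = "w * x"
  have B: "B \<ge> 0" using assms(3)[of 0] by linarith
  have s0: "(\<lambda>k::int. \<bar>\<phi> (?u - real_of_int k)\<bar>) summable_on UNIV"
    using summable_abs_dmoment[of 0 ?u] by simp
  have major: "(\<lambda>k::int. \<bar>\<phi> (?u - real_of_int k)\<bar> * (B * abs_cmoment \<psi> 0)) summable_on UNIV"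
    by (rule summable_on_cmult_left[OF s0])
  have bound: "\<bar>\<phi> (?u - real_of_int k) * (LINT v|lborel. \<psi> v * g ((v + real_of_int k) / w))\<bar> \<le>
      \<bar>\<phi> (?u - real_of_int k)\<bar> * (B * abs_cmoment \<psi> 0)" for k
    unfolding abs_mult by (rule mult_left_mono[OF integrable_psi_comp(2)[OF assms(2,3)]]) simp
  note cmp = abs_infsum_le_comparison[OF major bound]
  show "(\<lambda>k::int. \<phi> (?u - real_of_int k) * (LINT v|lborel. \<psi> v * g ((v + real_of_int k) / w))) summable_on UNIV"
    by (rule cmp(1))
  have "infsum (\<lambda>k::int. \<bar>\<phi> (?u - real_of_int k)\<bar> * (B * abs_cmoment \<psi> 0)) UNIV =
      infsum (\<lambda>k::int. \<bar>\<phi> (?u - real_of_int k)\<bar>) UNIV * (B * abs_cmoment \<psi> 0)"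
    by (rule infsum_cmult_left[OF s0])
  also have "\<dots> \<le> abs_dmoment \<phi> 0 * (B * abs_cmoment \<psi> 0)"
    using le_abs_dmoment[of 0 ?u] B abs_cmoment_nonneg by (intro mult_right_mono) auto
  finally show "\<bar>durrmeyer \<phi> \<psi> w g x\<bar> \<le> abs_dmoment \<phi> 0 * abs_cmoment \<psi> 0 * B"
    using cmp(2) unfolding durrmeyer_rescaled[OF assms(1)] by (simp add: mult_ac)
qed

lemma durrmeyer_diff:
  assumes "w > 0" "continuous_on UNIV g" "\<And>y. \<bar>g y\<bar> \<le> B" "continuous_on UNIV h" "\<And>y. \<bar>h y\<bar> \<le> B'"
  shows "durrmeyer \<phi> \<psi> w (\<lambda>y. g y - h y) x = durrmeyer \<phi> \<psi> w g x - durrmeyer \<phi> \<psi> w h x"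
proof -
  have "durrmeyer \<phi> \<psi> w (\<lambda>y. g y - h y) x =
     (\<Sum>\<^sub>\<infinity>k::int. \<phi> (w * x - real_of_int k) * (LINT v|lborel. \<psi> v * g ((v + real_of_int k) / w)) -
        \<phi> (w * x - real_of_int k) * (LINT v|lborel. \<psi> v * h ((v + real_of_int k) / w)))"
    unfolding durrmeyer_rescaled[OF assms(1)]
  proof (intro infsum_cong)
    fix k :: int
    have "(LINT v|lborel. \<psi> v * (g ((v + real_of_int k) / w) - h ((v + real_of_int k) / w))) =
       (LINT v|lborel. \<psi> v * g ((v + real_of_int k) / w) - \<psi> v * h ((v + real_of_int k) / w))"
      by (simp add: algebra_simps)
    also have "\<dots> = (LINT v|lborel. \<psi> v * g ((v + real_of_int k) / w)) - (LINT v|lborel. \<psi> v * h ((v + real_of_int k) / w))"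
      by (rule Bochner_Integration.integral_diff[OF integrable_psi_comp(1)[OF assms(2,3)] integrable_psi_comp(1)[OF assms(4,5)]])
    finally show "\<phi> (w * x - real_of_int k) * (LINT v|lborel. \<psi> v * (g ((v + real_of_int k) / w) - h ((v + real_of_int k) / w))) =
      \<phi> (w * x - real_of_int k) * (LINT v|lborel. \<psi> v * g ((v + real_of_int k) / w)) -
        \<phi> (w * x - real_of_int k) * (LINT v|lborel. \<psi> v * h ((v + real_of_int k) / w))"
      by (simp add: right_diff_distrib)
  qed
  also have "\<dots> = durrmeyer \<phi> \<psi> w g x - durrmeyer \<phi> \<psi> w h x"
    unfolding durrmeyer_rescaled[OF assms(1)]
    by (rule infsumI[OF has_sum_diff[OF has_sum_infsum has_sum_infsum]])
      (intro abs_durrmeyer_le(1)[OF assms(1-3)] abs_durrmeyer_le(1)[OF assms(1,4,5)])+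
  finally show ?thesis .
qed

lemma psi_power_integral:
  assumes "i \<le> r" "w \<noteq> 0"
  shows "integrable lborel (\<lambda>v. \<psi> v * ((v + c) / w) ^ i)"
    and "(LINT v|lborel. \<psi> v * ((v + c) / w) ^ i) = (\<Sum>\<nu>=0..i. real (i choose \<nu>) * cmoment \<psi> \<nu> * c ^ (i - \<nu>)) / w ^ i"
proof -
  have expand: "\<psi> v * ((v + c) / w) ^ i = (\<Sum>\<nu>=0..i. (real (i choose \<nu>) * c ^ (i - \<nu>) / w ^ i) * (v ^ \<nu> * \<psi> v))" for v
    by (simp add: power_divide binomial_ring atLeast0AtMost sum_distrib_left sum_divide_distrib mult_ac)
  have int: "integrable lborel (\<lambda>v. (real (i choose \<nu>) * c ^ (i - \<nu>) / w ^ i) * (v ^ \<nu> * \<psi> v))" if "\<nu> \<in> {0..i}" for \<nu>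
    using that assms(1) by (intro Bochner_Integration.integrable_mult_right integrable_cmoment) auto
  show "integrable lborel (\<lambda>v. \<psi> v * ((v + c) / w) ^ i)"
    unfolding expand by (rule Bochner_Integration.integrable_sum[OF int])
  have "(LINT v|lborel. \<psi> v * ((v + c) / w) ^ i) = (\<Sum>\<nu>=0..i. (real (i choose \<nu>) * c ^ (i - \<nu>) / w ^ i) * cmoment \<psi> \<nu>)"
    unfolding expand cmoment_def by (subst Bochner_Integration.integral_sum[OF int]) auto
  also have "\<dots> = (\<Sum>\<nu>=0..i. real (i choose \<nu>) * cmoment \<psi> \<nu> * c ^ (i - \<nu>)) / w ^ i"
    by (simp add: sum_divide_distrib mult_ac)
  finally show "(LINT v|lborel. \<psi> v * ((v + c) / w) ^ i) = (\<Sum>\<nu>=0..i. real (i choose \<nu>) * cmoment \<psi> \<nu> * c ^ (i - \<nu>)) / w ^ i" .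
qed

lemma durrmeyer_power_has_sum:
  assumes "i < r" "w > 0"
  shows "((\<lambda>k::int. \<phi> (w * x - real_of_int k) * (LINT v|lborel. \<psi> v * ((v + real_of_int k) / w - x) ^ i))
    has_sum (if i = 0 then 1 else 0)) UNIV"
proof -
  let ?u = "w * x"
  have shift: "(v + real_of_int k) / w - x = (v + (real_of_int k - ?u)) / w" for v k
    using assms(2) by (simp add: field_simps)
  have "((\<lambda>k::int. \<phi> (?u - real_of_int k) * (real_of_int k - ?u) ^ (i - \<nu>)) has_sum dmoment \<phi> (i - \<nu>) ?u) UNIV" for \<nu>
    unfolding dmoment_def using summable_dmoment[of "i - \<nu>" ?u] assms(1) by simp
  then have "((\<lambda>k::int. (1 / w ^ i) * (\<Sum>\<nu>=0..i. (real (i choose \<nu>) * cmoment \<psi> \<nu>) *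
      (\<phi> (?u - real_of_int k) * (real_of_int k - ?u) ^ (i - \<nu>))))
      has_sum (1 / w ^ i) * (\<Sum>\<nu>=0..i. (real (i choose \<nu>) * cmoment \<psi> \<nu>) * dmoment \<phi> (i - \<nu>) ?u)) UNIV"
    by (intro has_sum_cmult_right has_sum_sum) auto
  moreover have "(1 / w ^ i) * (\<Sum>\<nu>=0..i. (real (i choose \<nu>) * cmoment \<psi> \<nu>) * dmoment \<phi> (i - \<nu>) ?u) =
      (if i = 0 then 1 else 0)"
    using moment_condition[OF assms(1), of ?u] by simp
  moreover have "\<phi> (?u - real_of_int k) * (LINT v|lborel. \<psi> v * ((v + real_of_int k) / w - x) ^ i) =
      (1 / w ^ i) * (\<Sum>\<nu>=0..i. (real (i choose \<nu>) * cmoment \<psi> \<nu>) * (\<phi> (?u - real_of_int k) * (real_of_int k - ?u) ^ (i - \<nu>)))"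
    for k
    using psi_power_integral(2)[of i w "real_of_int k - ?u"] assms
    unfolding shift by (simp add: sum_distrib_left sum_divide_distrib mult_ac)
  ultimately show ?thesis by simp
qed

lemma psi_remainder_integral:
  assumes "m \<le> r" "w > 0" "continuous_on UNIV h" "\<And>y. \<bar>h y\<bar> \<le> M * \<bar>y - x\<bar> ^ m"
  shows "integrable lborel (\<lambda>v. \<psi> v * h ((v + c) / w))"
    and "\<bar>LINT v|lborel. \<psi> v * h ((v + c) / w)\<bar> \<le>
      M * 2 ^ m / w ^ m * (abs_cmoment \<psi> m + \<bar>c - w * x\<bar> ^ m * abs_cmoment \<psi> 0)"
proof -
  let ?d = "c - w * x"
  let ?major = "\<lambda>v. M * 2 ^ m / w ^ m * (\<bar>v\<bar> ^ m * \<bar>\<psi> v\<bar> + \<bar>?d\<bar> ^ m * \<bar>\<psi> v\<bar>)"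
  have M: "M \<ge> 0" using assms(4)[of "x + 1"] by simp
  have bound: "\<bar>\<psi> v * h ((v + c) / w)\<bar> \<le> ?major v" for v
  proof -
    have "(v + c) / w - x = (v + ?d) / w" using assms(2) by (simp add: field_simps)
    then have "\<bar>h ((v + c) / w)\<bar> \<le> M * (\<bar>v + ?d\<bar> ^ m / w ^ m)"
      using assms(4)[of "(v + c) / w"] assms(2) by (simp add: power_divide)
    also have "\<dots> \<le> M * (2 ^ m * (\<bar>v\<bar> ^ m + \<bar>?d\<bar> ^ m) / w ^ m)"
      using M assms(2) by (intro mult_left_mono divide_right_mono abs_add_power_le) auto
    finally have "\<bar>\<psi> v\<bar> * \<bar>h ((v + c) / w)\<bar> \<le> \<bar>\<psi> v\<bar> * (M * (2 ^ m * (\<bar>v\<bar> ^ m + \<bar>?d\<bar> ^ m) / w ^ m))"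
      by (rule mult_left_mono) simp
    then show ?thesis by (simp add: abs_mult algebra_simps add_divide_distrib)
  qed
  have major: "integrable lborel ?major"
    using integrable_abs_cmoment[OF assms(1)] psi_integrable by auto
  show int: "integrable lborel (\<lambda>v. \<psi> v * h ((v + c) / w))"
    using order_trans[OF bound abs_ge_self]
    by (intro Bochner_Integration.integrable_bound[OF major borel_measurable_psi_comp[OF assms(3)]] AE_I2)
      (simp only: real_norm_def)
  have "\<bar>LINT v|lborel. \<psi> v * h ((v + c) / w)\<bar> \<le> (LINT v|lborel. ?major v)"
    by (rule integral_abs_bound_integral[OF int major bound])
  also have "\<dots> = M * 2 ^ m / w ^ m * (abs_cmoment \<psi> m + \<bar>?d\<bar> ^ m * abs_cmoment \<psi> 0)"
    unfolding abs_cmoment_def using integrable_abs_cmoment[OF assms(1)] psi_integrable by simp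
  finally show "\<bar>LINT v|lborel. \<psi> v * h ((v + c) / w)\<bar> \<le>
      M * 2 ^ m / w ^ m * (abs_cmoment \<psi> m + \<bar>?d\<bar> ^ m * abs_cmoment \<psi> 0)" .
qed

definition jackson_const :: "nat \<Rightarrow> real" where
  "jackson_const m = 2 ^ m * (abs_dmoment \<phi> 0 * abs_cmoment \<psi> m + abs_dmoment \<phi> m * abs_cmoment \<psi> 0)"

lemma durrmeyer_remainder:
  assumes "m \<le> r" "w > 0" "continuous_on UNIV h" "\<And>y. \<bar>h y\<bar> \<le> M * \<bar>y - x\<bar> ^ m"
  shows "(\<lambda>k::int. \<phi> (w * x - real_of_int k) * (LINT v|lborel. \<psi> v * h ((v + real_of_int k) / w))) summable_on UNIV"
    and "\<bar>\<Sum>\<^sub>\<infinity>k::int. \<phi> (w * x - real_of_int k) * (LINT v|lborel. \<psi> v * h ((v + real_of_int k) / w))\<bar> \<le>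
      jackson_const m * M / w ^ m"
proof -
  let ?u = "w * x"
  let ?a = "\<lambda>j k::int. \<bar>\<phi> (?u - real_of_int k)\<bar> * \<bar>real_of_int k - ?u\<bar> ^ j"
  define L where "L = M * 2 ^ m / w ^ m"
  have L: "L \<ge> 0" unfolding L_def using assms(2) assms(4)[of "x + 1"] by simp
  define bnd where "bnd = (\<lambda>k. L * (abs_cmoment \<psi> m * ?a 0 k + abs_cmoment \<psi> 0 * ?a m k))"
  have bnd_sum: "(bnd has_sum L * (abs_cmoment \<psi> m * infsum (?a 0) UNIV + abs_cmoment \<psi> 0 * infsum (?a m) UNIV)) UNIV"
    unfolding bnd_def using summable_abs_dmoment[of 0 ?u] summable_abs_dmoment[OF assms(1), of ?u]
    by (intro has_sum_cmult_right has_sum_add has_sum_infsum) auto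
  have le: "\<bar>\<phi> (?u - real_of_int k) * (LINT v|lborel. \<psi> v * h ((v + real_of_int k) / w))\<bar> \<le> bnd k" for k
  proof -
    have "\<bar>\<phi> (?u - real_of_int k) * (LINT v|lborel. \<psi> v * h ((v + real_of_int k) / w))\<bar> \<le>
        \<bar>\<phi> (?u - real_of_int k)\<bar> * (L * (abs_cmoment \<psi> m + \<bar>real_of_int k - ?u\<bar> ^ m * abs_cmoment \<psi> 0))"
      unfolding abs_mult L_def by (intro mult_left_mono psi_remainder_integral(2)[OF assms]) auto
    also have "\<dots> = bnd k" unfolding bnd_def by (simp add: algebra_simps)
    finally show ?thesis .
  qed
  note cmp = abs_infsum_le_comparison[OF has_sum_imp_summable[OF bnd_sum] le]
  show "(\<lambda>k::int. \<phi> (?u - real_of_int k) * (LINT v|lborel. \<psi> v * h ((v + real_of_int k) / w))) summable_on UNIV"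
    by (rule cmp(1))
  have "infsum bnd UNIV \<le> L * (abs_cmoment \<psi> m * abs_dmoment \<phi> 0 + abs_cmoment \<psi> 0 * abs_dmoment \<phi> m)"
    unfolding infsumI[OF bnd_sum] using le_abs_dmoment[of 0 ?u] le_abs_dmoment[OF assms(1), of ?u] L
    by (intro mult_left_mono add_mono mult_left_mono abs_cmoment_nonneg) auto
  also have "\<dots> = jackson_const m * M / w ^ m" unfolding jackson_const_def L_def by (simp add: field_simps)
  finally show "\<bar>\<Sum>\<^sub>\<infinity>k::int. \<phi> (?u - real_of_int k) * (LINT v|lborel. \<psi> v * h ((v + real_of_int k) / w))\<bar> \<le>
      jackson_const m * M / w ^ m"
    using cmp(2) by linarith
qed

lemma durrmeyer_poly_has_sum:
  assumes "1 \<le> m" "m \<le> r" "w > 0"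
  shows "((\<lambda>k::int. \<Sum>i<m. c i * (\<phi> (w * x - real_of_int k) *
      (LINT v|lborel. \<psi> v * ((v + real_of_int k) / w - x) ^ i))) has_sum c 0) UNIV"
proof -
  have "((\<lambda>k::int. \<Sum>i<m. c i * (\<phi> (w * x - real_of_int k) *
      (LINT v|lborel. \<psi> v * ((v + real_of_int k) / w - x) ^ i))) has_sum (\<Sum>i<m. c i * (if i = 0 then 1 else 0))) UNIV"
    using assms by (intro has_sum_sum has_sum_cmult_right durrmeyer_power_has_sum) auto
  also have "(\<Sum>i<m. c i * (if i = 0 then 1 else 0)) = c 0"
    using assms(1) by (simp add: if_distrib[of "(*) _"] cong: if_cong)
  finally show ?thesis .
qed

lemma durrmeyer_Jackson:
  assumes m: "1 \<le> m" "m \<le> r" and w: "w > 0" and dif_0: "dif 0 = g"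
    and dif: "\<And>i t. i < m \<Longrightarrow> (dif i has_real_derivative dif (Suc i) t) (at t)"
    and dif_m: "\<And>t. \<bar>dif m t\<bar> \<le> M"
  shows "\<bar>durrmeyer \<phi> \<psi> w g x - g x\<bar> \<le> jackson_const m * (M / fact m) / w ^ m"
proof -
  define c where "c = (\<lambda>i. dif i x / fact i)"
  define h where "h = (\<lambda>y. g y - (\<Sum>i<m. c i * (y - x) ^ i))"
  have "isCont g t" for t using DERIV_isCont[OF dif[of 0 t]] dif_0 m(1) by simp
  then have h_cont: "continuous_on UNIV h" unfolding h_def
    by (intro continuous_intros continuous_at_imp_continuous_on) auto
  have h_bound: "\<bar>h y\<bar> \<le> M / fact m * \<bar>y - x\<bar> ^ m" for y
    unfolding h_def c_def using Taylor_remainder_bound[of m dif g M y x] assms by simp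
  note rem = durrmeyer_remainder[OF m(2) w h_cont h_bound]
  let ?T = "\<lambda>i k::int. \<phi> (w * x - real_of_int k) * (LINT v|lborel. \<psi> v * ((v + real_of_int k) / w - x) ^ i)"
  let ?R = "\<lambda>k::int. \<phi> (w * x - real_of_int k) * (LINT v|lborel. \<psi> v * h ((v + real_of_int k) / w))"
  have taylor_part: "((\<lambda>k. \<Sum>i<m. c i * ?T i k) has_sum g x) UNIV"
    using durrmeyer_poly_has_sum[OF m w, of c x] dif_0 unfolding c_def by simp
  have split: "\<phi> (w * x - real_of_int k) * (LINT v|lborel. \<psi> v * g ((v + real_of_int k) / w)) =
      (\<Sum>i<m. c i * ?T i k) + ?R k" for k
  proof -
    have shift: "(v + real_of_int k) / w - x = (v + (real_of_int k - w * x)) / w" for v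
      using w by (simp add: field_simps)
    have int_T: "integrable lborel (\<lambda>v. c i * (\<psi> v * ((v + real_of_int k) / w - x) ^ i))" if "i < m" for i
      unfolding shift using psi_power_integral(1)[of i w] that m w by simp
    have "(LINT v|lborel. \<psi> v * g ((v + real_of_int k) / w)) =
        (LINT v|lborel. (\<Sum>i<m. c i * (\<psi> v * ((v + real_of_int k) / w - x) ^ i)) + \<psi> v * h ((v + real_of_int k) / w))"
      unfolding h_def by (simp add: sum_distrib_left algebra_simps)
    also have "\<dots> = (\<Sum>i<m. c i * (LINT v|lborel. \<psi> v * ((v + real_of_int k) / w - x) ^ i)) +
        (LINT v|lborel. \<psi> v * h ((v + real_of_int k) / w))"
      using int_T psi_remainder_integral(1)[OF m(2) w h_cont h_bound]
      by (subst Bochner_Integration.integral_add) (auto simp: Bochner_Integration.integral_sum)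
    finally show ?thesis by (simp add: distrib_left sum_distrib_left mult_ac)
  qed
  have "((\<lambda>k. \<phi> (w * x - real_of_int k) * (LINT v|lborel. \<psi> v * g ((v + real_of_int k) / w)))
      has_sum (g x + infsum ?R UNIV)) UNIV"
    unfolding split by (rule has_sum_add[OF taylor_part has_sum_infsum[OF rem(1)]])
  then have "durrmeyer \<phi> \<psi> w g x = g x + infsum ?R UNIV"
    unfolding durrmeyer_rescaled[OF w] by (rule infsumI)
  then show ?thesis using rem(2) by simp
qed

lemma durrmeyer_error_LipStar:
  assumes m: "1 \<le> m" "m \<le> r" and \<alpha>: "0 < \<alpha>" "\<alpha> < real m"
    and f: "continuous_on UNIV f" "\<And>y. \<bar>f y\<bar> \<le> B" and K: "K \<ge> 0" and w: "w > 0"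
    and lip: "\<And>t y. 0 \<le> t \<Longrightarrow> t \<le> real m / w \<Longrightarrow> \<bar>fdiff m f t y\<bar> \<le> K * t powr \<alpha>"
  shows "\<bar>durrmeyer \<phi> \<psi> w f x - f x\<bar> \<le>
    ((abs_dmoment \<phi> 0 * abs_cmoment \<psi> 0 + 1) * real m powr \<alpha> + jackson_const m / fact m * 2 ^ m) * K * w powr (-\<alpha>)"
proof -
  define a where "a = 1 / w"
  define F where "F = smoothing_deriv m a f 0"
  have a: "a > 0" unfolding a_def using w by simp
  have lip_a: "\<bar>fdiff m f t y\<bar> \<le> K * t powr \<alpha>" if "0 \<le> t" "t \<le> real m * a" for t y
    using lip that unfolding a_def by simp
  have F_cont: "continuous_on UNIV F" unfolding F_def by (rule continuous_on_smoothing[OF f(1)])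
  have F_bound: "\<bar>F y\<bar> \<le> 2 ^ m * B" for y unfolding F_def by (rule abs_smoothing_le[OF a f])
  have err: "\<bar>f y - F y\<bar> \<le> K * (real m * a) powr \<alpha>" for y
    unfolding F_def using \<alpha>(1) by (intro abs_smoothing_error_le[OF a f(1) _ K lip_a]) auto
  have "\<bar>durrmeyer \<phi> \<psi> w F x - F x\<bar> \<le> jackson_const m * (2 ^ m * K * a powr (\<alpha> - real m) / fact m) / w ^ m"
    using abs_smoothing_deriv_top_le[OF a _ K lip_a] has_real_derivative_smoothing_deriv[OF f(1)] \<alpha>(2)
    unfolding F_def by (intro durrmeyer_Jackson[OF m w refl]) auto
  also have "\<dots> = jackson_const m / fact m * 2 ^ m * K * w powr (-\<alpha>)"
  proof -
    have "a powr (\<alpha> - real m) / w ^ m = a powr (\<alpha> - real m) * a powr (real m)"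
      unfolding a_def using w by (simp add: powr_realpow power_one_over divide_inverse power_inverse)
    also have "\<dots> = w powr (-\<alpha>)" unfolding a_def using w by (simp add: powr_add[symmetric] powr_divide powr_minus_divide)
    finally have rescale: "a powr (\<alpha> - real m) / w ^ m = w powr (-\<alpha>)" .
    show ?thesis by (simp flip: rescale)
  qed
  finally have approx: "\<bar>durrmeyer \<phi> \<psi> w F x - F x\<bar> \<le> jackson_const m / fact m * 2 ^ m * K * w powr (-\<alpha>)" .
  have "continuous_on UNIV (\<lambda>y. f y - F y)" by (intro continuous_intros f(1) F_cont)
  from abs_durrmeyer_le(2)[OF w this err]
  have "\<bar>durrmeyer \<phi> \<psi> w (\<lambda>y. f y - F y) x\<bar> \<le> abs_dmoment \<phi> 0 * abs_cmoment \<psi> 0 * (K * (real m * a) powr \<alpha>)" .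
  moreover have "durrmeyer \<phi> \<psi> w (\<lambda>y. f y - F y) x = durrmeyer \<phi> \<psi> w f x - durrmeyer \<phi> \<psi> w F x"
    by (rule durrmeyer_diff[OF w f F_cont F_bound])
  ultimately have "\<bar>durrmeyer \<phi> \<psi> w f x - f x\<bar> \<le>
      abs_dmoment \<phi> 0 * abs_cmoment \<psi> 0 * (K * (real m * a) powr \<alpha>) + K * (real m * a) powr \<alpha> +
      jackson_const m / fact m * 2 ^ m * K * w powr (-\<alpha>)"
    using err[of x] approx by linarith
  also have "(real m * a) powr \<alpha> = real m powr \<alpha> * w powr (-\<alpha>)"
    unfolding a_def using w by (simp add: powr_mult powr_divide powr_minus_divide)
  finally show ?thesis by (simp add: algebra_simps)
qed

lemma durrmeyer_rate_Cr:
  assumes "Cr r f"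
  shows "(\<lambda>w. supnorm (\<lambda>x. durrmeyer \<phi> \<psi> w f x - f x)) \<in> O[at_top](\<lambda>w. w powr (-real r))"
proof -
  have derivs: "\<And>i t. i < r \<Longrightarrow> ((deriv ^^ i) f has_real_derivative (deriv ^^ Suc i) f t) (at t)"
    using assms unfolding Cr_def by blast
  have "bucont ((deriv ^^ r) f)" using assms unfolding Cr_def by blast
  then obtain M where M: "\<And>t. \<bar>(deriv ^^ r) f t\<bar> \<le> M"
    unfolding bucont_def bounded_iff by auto
  have "\<bar>durrmeyer \<phi> \<psi> w f x - f x\<bar> \<le> (jackson_const r * (M / fact r)) * w powr (-real r)" if "w > 0" for w x
  proof -
    have "\<bar>durrmeyer \<phi> \<psi> w f x - f x\<bar> \<le> jackson_const r * (M / fact r) / w ^ r"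
      using r_ge_2 by (intro durrmeyer_Jackson[OF _ order.refl that _ derivs M]) auto
    then show ?thesis using that by (simp add: powr_minus powr_realpow divide_inverse)
  qed
  then show ?thesis by (intro supnorm_bigo eventually_mono[OF eventually_gt_at_top[of 0]]) blast
qed

lemma durrmeyer_rate_LipStar:
  assumes "LipStar \<alpha> f" "0 < \<alpha>" "\<alpha> < real r"
  shows "(\<lambda>w. supnorm (\<lambda>x. durrmeyer \<phi> \<psi> w f x - f x)) \<in> O[at_top](\<lambda>w. w powr (-\<alpha>))"
proof -
  define m where "m = nat \<lfloor>\<alpha>\<rfloor> + 1"
  have m: "1 \<le> m" "m \<le> r" "\<alpha> < real m"
    unfolding m_def using assms(2,3) floor_less_iff[of \<alpha> "int r"] by linarith+
  obtain K \<delta> where K: "K \<ge> 0" and \<delta>: "\<delta> > 0"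
    and lip: "\<And>t x. 0 \<le> t \<Longrightarrow> t < \<delta> \<Longrightarrow> \<bar>fdiff m f t x\<bar> \<le> K * t powr \<alpha>"
    using LipStar_fdiff_bound[OF assms(1)] unfolding m_def by blast
  have "bucont f" using assms(1) unfolding LipStar_def by simp
  then have f_cont: "continuous_on UNIV f"
    unfolding bucont_def by (simp add: uniformly_continuous_imp_continuous)
  from \<open>bucont f\<close> obtain B where B: "\<And>y. \<bar>f y\<bar> \<le> B"
    unfolding bucont_def bounded_iff by auto
  let ?C = "(abs_dmoment \<phi> 0 * abs_cmoment \<psi> 0 + 1) * real m powr \<alpha> + jackson_const m / fact m * 2 ^ m"
  have "\<bar>durrmeyer \<phi> \<psi> w f x - f x\<bar> \<le> (?C * K) * w powr (-\<alpha>)" if "real m / \<delta> < w" for w x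
  proof -
    have "0 \<le> real m / \<delta>" using \<delta> by simp
    then have "w > 0" using that by linarith
    then have w: "w > 0" "real m / w < \<delta>" using that \<delta> by (simp_all add: field_simps)
    show ?thesis using lip w
      by (intro order_trans[OF durrmeyer_error_LipStar[OF m(1,2) assms(2) m(3) f_cont B K w(1)]]) auto
  qed
  then show ?thesis by (intro supnorm_bigo eventually_mono[OF eventually_gt_at_top[of "real m / \<delta>"]]) blast
qed

end

theorem corollary3p2:
  fixes r :: nat and \<phi> \<psi> :: "real \<Rightarrow> real" and \<theta> :: real
  assumes "r \<ge> 2"
    and "discrete_kernel \<phi>" and "continuous_kernel \<psi>"
    and "cond_i r \<phi>" and "cond_ii r \<phi> \<psi>"
    and "\<theta> > real r + 1" and "cond_Theta \<theta> \<phi>" and "cond_Theta \<theta> \<psi>"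
  shows "(\<forall>(f::real \<Rightarrow> real) (\<alpha>::real). LipStar \<alpha> f \<and> 0 < \<alpha> \<and> \<alpha> < real r \<longrightarrow>
            (\<lambda>w. supnorm (\<lambda>x. durrmeyer \<phi> \<psi> w f x - f x)) \<in> O[at_top](\<lambda>w. w powr (-\<alpha>)))
       \<and> (\<forall>f::real \<Rightarrow> real. Cr r f \<longrightarrow>
            (\<lambda>w. supnorm (\<lambda>x. durrmeyer \<phi> \<psi> w f x - f x)) \<in> O[at_top](\<lambda>w. w powr (-real r)))"
proof -
  interpret durrmeyer_kernels r \<phi> \<psi> \<theta>
    using assms by (simp add: durrmeyer_kernels_def)
  show ?thesis using durrmeyer_rate_LipStar durrmeyer_rate_Cr by blast
qed

end
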